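(* Let $\mathcal V$ be a descent category and $k$ a natural number. If $f:X\to Y$ is a fibration of $k$-groupoids and $g:Y\to Z$ is a morphism of $k$-groupoids such that $g$ and $g\circ f$ are hypercovers, then $f$ is a hypercover.
   Context: A descent category is a small category $\mathcal V$ with a subcategory of morphisms called covers such that: $\mathcal V$ has finite limits; pullbacks of covers are covers; if $f$ and $g\circ f$ are covers then $g$ is a cover. A simplicial space is a simplicial object in $\mathcal V$; $\mathrm{Map}(T,X)$ is the finite limit representing simplicial maps $T\to X$; $\mathrm{Map}(S\hookrightarrow T,f)=\mathrm{Map}(S,X)\times_{\mathrm{Map}(S,Y)}\mathrm{Map}(T,Y)$. $\Lambda^n_i=\bigcup_{j\ne i}\partial_j\Delta^n$. A $k$-groupoid is a simplicial space with $X_n\to\mathrm{Map}(\Lambda^n_i,X)$ a cover for $n>0$, $0\le i\le n$, and an isomorphism for $n>k$. A morphism $f$ is a fibration if $X_n\to\mathrm{Map}(\Lambda^n_i\hookrightarrow\Delta^n,f)$ is a cover for all $n>0$, $0\le i\le n$, and a hypercover if $X_n\to\mathrm{Map}(\partial\Delta^n\hookrightarrow\Delta^n,f)$ is a cover for all $n\ge0$. *)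

theory Defs
  imports Main
begin

record ('o,'m) cat =
  Ob  :: "'o set"
  Ar  :: "'m set"
  Dom :: "'m \<Rightarrow> 'o"
  Cod :: "'m \<Rightarrow> 'o"
  Cmp :: "'m \<Rightarrow> 'm \<Rightarrow> 'm"   \<comment> \<open>Cmp C g f = g o f\<close>
  Idt :: "'o \<Rightarrow> 'm"

definition hom :: "('o,'m) cat \<Rightarrow> 'o \<Rightarrow> 'o \<Rightarrow> 'm set" where
  "hom C a b = {f \<in> Ar C. Dom C f = a \<and> Cod C f = b}"

definition is_category :: "('o,'m) cat \<Rightarrow> bool" where
  "is_category C \<longleftrightarrow>
     (\<forall>f\<in>Ar C. Dom C f \<in> Ob C \<and> Cod C f \<in> Ob C) \<and>
     (\<forall>a\<in>Ob C. Idt C a \<in> hom C a a) \<and>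
     (\<forall>f g. f \<in> Ar C \<and> g \<in> Ar C \<and> Cod C f = Dom C g \<longrightarrow>
            Cmp C g f \<in> hom C (Dom C f) (Cod C g)) \<and>
     (\<forall>f g h. f \<in> Ar C \<and> g \<in> Ar C \<and> h \<in> Ar C \<and> Cod C f = Dom C g \<and> Cod C g = Dom C h \<longrightarrow>
            Cmp C h (Cmp C g f) = Cmp C (Cmp C h g) f) \<and>
     (\<forall>f\<in>Ar C. Cmp C f (Idt C (Dom C f)) = f \<and> Cmp C (Idt C (Cod C f)) f = f)"

definition is_iso :: "('o,'m) cat \<Rightarrow> 'm \<Rightarrow> bool" where
  "is_iso C f \<longleftrightarrow> f \<in> Ar C \<and>
     (\<exists>g \<in> hom C (Cod C f) (Dom C f). Cmp C g f = Idt C (Dom C f) \<and> Cmp C f g = Idt C (Cod C f))"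

definition is_diagram :: "('o,'m) cat \<Rightarrow> 'i set \<Rightarrow> ('i \<Rightarrow> 'o) \<Rightarrow> ('i \<times> 'i \<times> 'm) set \<Rightarrow> bool" where
  "is_diagram C I D E \<longleftrightarrow> (\<forall>i\<in>I. D i \<in> Ob C) \<and>
     (\<forall>(i,j,m)\<in>E. i \<in> I \<and> j \<in> I \<and> m \<in> hom C (D i) (D j))"

definition is_cone :: "('o,'m) cat \<Rightarrow> 'i set \<Rightarrow> ('i \<Rightarrow> 'o) \<Rightarrow> ('i \<times> 'i \<times> 'm) set \<Rightarrow> 'o \<Rightarrow> ('i \<Rightarrow> 'm) \<Rightarrow> bool" where
  "is_cone C I D E L p \<longleftrightarrow> L \<in> Ob C \<and> (\<forall>i\<in>I. p i \<in> hom C L (D i)) \<and>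
     (\<forall>(i,j,m)\<in>E. Cmp C m (p i) = p j)"

definition is_limit :: "('o,'m) cat \<Rightarrow> 'i set \<Rightarrow> ('i \<Rightarrow> 'o) \<Rightarrow> ('i \<times> 'i \<times> 'm) set \<Rightarrow> 'o \<Rightarrow> ('i \<Rightarrow> 'm) \<Rightarrow> bool" where
  "is_limit C I D E L p \<longleftrightarrow> is_cone C I D E L p \<and>
     (\<forall>L' q. is_cone C I D E L' q \<longrightarrow>
        (\<exists>!u. u \<in> hom C L' L \<and> (\<forall>i\<in>I. Cmp C (p i) u = q i)))"

text \<open>Finite limits: every diagram over a finite graph has a limit
  (finite graphs can be indexed by natural numbers).\<close>

definition has_finite_limits :: "('o,'m) cat \<Rightarrow> bool" where
  "has_finite_limits C \<longleftrightarrow>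
     (\<forall>(I::nat set) D (E::(nat \<times> nat \<times> 'm) set).
        finite I \<and> finite E \<and> is_diagram C I D E \<longrightarrow> (\<exists>L p. is_limit C I D E L p))"

definition is_pullback :: "('o,'m) cat \<Rightarrow> 'm \<Rightarrow> 'm \<Rightarrow> 'o \<Rightarrow> 'm \<Rightarrow> 'm \<Rightarrow> bool" where
  "is_pullback C f g P p1 p2 \<longleftrightarrow>
     f \<in> Ar C \<and> g \<in> Ar C \<and> Cod C f = Cod C g \<and>
     p1 \<in> hom C P (Dom C f) \<and> p2 \<in> hom C P (Dom C g) \<and> Cmp C f p1 = Cmp C g p2 \<and>
     (\<forall>Q q1 q2. q1 \<in> hom C Q (Dom C f) \<and> q2 \<in> hom C Q (Dom C g) \<and> Cmp C f q1 = Cmp C g q2 \<longrightarrow>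
        (\<exists>!u. u \<in> hom C Q P \<and> Cmp C p1 u = q1 \<and> Cmp C p2 u = q2))"

definition descent_category :: "('o,'m) cat \<Rightarrow> 'm set \<Rightarrow> bool" where
  "descent_category C Cov \<longleftrightarrow>
     is_category C \<and> has_finite_limits C \<and>
     Cov \<subseteq> Ar C \<and>
     (\<forall>a\<in>Ob C. Idt C a \<in> Cov) \<and>
     (\<forall>f\<in>Cov. \<forall>g\<in>Cov. Cod C f = Dom C g \<longrightarrow> Cmp C g f \<in> Cov) \<and>
     (\<forall>f g P p1 p2. f \<in> Cov \<and> is_pullback C f g P p1 p2 \<longrightarrow> p2 \<in> Cov) \<and>
     (\<forall>f g. f \<in> Cov \<and> g \<in> Ar C \<and> Cod C f = Dom C g \<and> Cmp C g f \<in> Cov \<longrightarrow> g \<in> Cov)"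

text \<open>Monotone maps [n] \<rightarrow> [m], represented by functions nat \<Rightarrow> nat (only values on {0..n} matter).\<close>

definition mono_map :: "nat \<Rightarrow> nat \<Rightarrow> (nat \<Rightarrow> nat) \<Rightarrow> bool" where
  "mono_map n m \<alpha> \<longleftrightarrow> (\<forall>i\<le>n. \<alpha> i \<le> m) \<and> (\<forall>i j. i \<le> j \<and> j \<le> n \<longrightarrow> \<alpha> i \<le> \<alpha> j)"

definition is_simplicial :: "('o,'m) cat \<Rightarrow> (nat \<Rightarrow> 'o) \<Rightarrow> (nat \<Rightarrow> nat \<Rightarrow> (nat \<Rightarrow> nat) \<Rightarrow> 'm) \<Rightarrow> bool" where
  "is_simplicial C X Xm \<longleftrightarrow>
     (\<forall>n. X n \<in> Ob C) \<and>
     (\<forall>n m \<alpha>. mono_map n m \<alpha> \<longrightarrow> Xm n m \<alpha> \<in> hom C (X m) (X n)) \<and>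
     (\<forall>n m \<alpha> \<beta>. mono_map n m \<alpha> \<and> (\<forall>i\<le>n. \<alpha> i = \<beta> i) \<longrightarrow> Xm n m \<alpha> = Xm n m \<beta>) \<and>
     (\<forall>n. Xm n n id = Idt C (X n)) \<and>
     (\<forall>n m l \<alpha> \<beta>. mono_map n m \<alpha> \<and> mono_map m l \<beta> \<longrightarrow>
        Xm n l (\<beta> \<circ> \<alpha>) = Cmp C (Xm n m \<alpha>) (Xm m l \<beta>))"

definition is_smap :: "('o,'m) cat \<Rightarrow> (nat \<Rightarrow> 'o) \<Rightarrow> (nat \<Rightarrow> nat \<Rightarrow> (nat \<Rightarrow> nat) \<Rightarrow> 'm)
     \<Rightarrow> (nat \<Rightarrow> 'o) \<Rightarrow> (nat \<Rightarrow> nat \<Rightarrow> (nat \<Rightarrow> nat) \<Rightarrow> 'm) \<Rightarrow> (nat \<Rightarrow> 'm) \<Rightarrow> bool" where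
  "is_smap C X Xm Y Ym f \<longleftrightarrow>
     (\<forall>n. f n \<in> hom C (X n) (Y n)) \<and>
     (\<forall>n m \<alpha>. mono_map n m \<alpha> \<longrightarrow> Cmp C (f n) (Xm n m \<alpha>) = Cmp C (Ym n m \<alpha>) (f m))"

text \<open>A simplicial subset T of \<Delta>^n is given by its set of nondegenerate simplices:
  nonempty subsets of {0..n}, closed under passing to nonempty subsets.\<close>

definition sdim :: "nat set \<Rightarrow> nat" where
  "sdim \<sigma> = card \<sigma> - 1"

text \<open>For \<tau> \<subseteq> \<sigma>, the monotone injection [sdim \<tau>] \<rightarrow> [sdim \<sigma>] corresponding to the inclusion.\<close>

definition incl :: "nat set \<Rightarrow> nat set \<Rightarrow> nat \<Rightarrow> nat" where
  "incl \<tau> \<sigma> k = card {x \<in> \<sigma>. x < sorted_list_of_set \<tau> ! k}"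

definition simplices :: "nat \<Rightarrow> nat set set" where
  "simplices n = {\<sigma>. \<sigma> \<subseteq> {0..n} \<and> \<sigma> \<noteq> {}}"

definition boundary :: "nat \<Rightarrow> nat set set" where
  "boundary n = {\<sigma> \<in> simplices n. \<sigma> \<noteq> {0..n}}"

definition horn :: "nat \<Rightarrow> nat \<Rightarrow> nat set set" where
  "horn n i = {\<sigma> \<in> simplices n. \<exists>j\<le>n. j \<noteq> i \<and> j \<notin> \<sigma>}"

definition sedges :: "(nat \<Rightarrow> nat \<Rightarrow> (nat \<Rightarrow> nat) \<Rightarrow> 'm) \<Rightarrow> nat set set \<Rightarrow> (nat set \<times> nat set \<times> 'm) set" where
  "sedges Xm T = {(\<sigma>, \<tau>, Xm (sdim \<tau>) (sdim \<sigma>) (incl \<tau> \<sigma>)) | \<sigma> \<tau>. \<sigma> \<in> T \<and> \<tau> \<in> T \<and> \<tau> \<subseteq> \<sigma>}"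

definition is_Map :: "('o,'m) cat \<Rightarrow> (nat \<Rightarrow> 'o) \<Rightarrow> (nat \<Rightarrow> nat \<Rightarrow> (nat \<Rightarrow> nat) \<Rightarrow> 'm)
     \<Rightarrow> nat set set \<Rightarrow> 'o \<Rightarrow> (nat set \<Rightarrow> 'm) \<Rightarrow> bool" where
  "is_Map C X Xm T L p \<longleftrightarrow> is_limit C T (\<lambda>\<sigma>. X (sdim \<sigma>)) (sedges Xm T) L p"

definition leg :: "(nat \<Rightarrow> nat \<Rightarrow> (nat \<Rightarrow> nat) \<Rightarrow> 'm) \<Rightarrow> nat \<Rightarrow> nat set \<Rightarrow> 'm" where
  "leg Xm n \<sigma> = Xm (sdim \<sigma>) n (incl \<sigma> {0..n})"

text \<open>The canonical map X_n \<rightarrow> Map(T,X) (T \<subseteq> \<Delta>^n) has property Pr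
  (for every choice of the limit; the map is unique).\<close>

definition canon_map_prop :: "('o,'m) cat \<Rightarrow> ('m \<Rightarrow> bool) \<Rightarrow> (nat \<Rightarrow> 'o)
     \<Rightarrow> (nat \<Rightarrow> nat \<Rightarrow> (nat \<Rightarrow> nat) \<Rightarrow> 'm) \<Rightarrow> nat \<Rightarrow> nat set set \<Rightarrow> bool" where
  "canon_map_prop C Pr X Xm n T \<longleftrightarrow>
     (\<forall>L p u. is_Map C X Xm T L p \<and> u \<in> hom C (X n) L \<and>
        (\<forall>\<sigma>\<in>T. Cmp C (p \<sigma>) u = leg Xm n \<sigma>) \<longrightarrow> Pr u)"

text \<open>The canonical map X_n \<rightarrow> Map(S \<hookrightarrow> T, f) = Map(S,X) \<times>_{Map(S,Y)} Map(T,Y)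
  has property Pr (for every choice of the limits and the pullback).\<close>

definition rel_map_prop :: "('o,'m) cat \<Rightarrow> ('m \<Rightarrow> bool)
     \<Rightarrow> (nat \<Rightarrow> 'o) \<Rightarrow> (nat \<Rightarrow> nat \<Rightarrow> (nat \<Rightarrow> nat) \<Rightarrow> 'm)
     \<Rightarrow> (nat \<Rightarrow> 'o) \<Rightarrow> (nat \<Rightarrow> nat \<Rightarrow> (nat \<Rightarrow> nat) \<Rightarrow> 'm)
     \<Rightarrow> (nat \<Rightarrow> 'm) \<Rightarrow> nat \<Rightarrow> nat set set \<Rightarrow> nat set set \<Rightarrow> bool" where
  "rel_map_prop C Pr X Xm Y Ym f n S T \<longleftrightarrow>
     (\<forall>LSX pSX LSY pSY LTY pTY a b P q1 q2 u.
        is_Map C X Xm S LSX pSX \<and> is_Map C Y Ym S LSY pSY \<and> is_Map C Y Ym T LTY pTY \<and>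
        a \<in> hom C LSX LSY \<and> (\<forall>\<sigma>\<in>S. Cmp C (pSY \<sigma>) a = Cmp C (f (sdim \<sigma>)) (pSX \<sigma>)) \<and>
        b \<in> hom C LTY LSY \<and> (\<forall>\<sigma>\<in>S. Cmp C (pSY \<sigma>) b = pTY \<sigma>) \<and>
        is_pullback C a b P q1 q2 \<and>
        u \<in> hom C (X n) P \<and>
        (\<forall>\<sigma>\<in>S. Cmp C (pSX \<sigma>) (Cmp C q1 u) = leg Xm n \<sigma>) \<and>
        (\<forall>\<sigma>\<in>T. Cmp C (pTY \<sigma>) (Cmp C q2 u) = Cmp C (f (sdim \<sigma>)) (leg Xm n \<sigma>))
        \<longrightarrow> Pr u)"

definition k_groupoid :: "('o,'m) cat \<Rightarrow> 'm set \<Rightarrow> nat \<Rightarrow> (nat \<Rightarrow> 'o)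
     \<Rightarrow> (nat \<Rightarrow> nat \<Rightarrow> (nat \<Rightarrow> nat) \<Rightarrow> 'm) \<Rightarrow> bool" where
  "k_groupoid C Cov k X Xm \<longleftrightarrow> is_simplicial C X Xm \<and>
     (\<forall>n>0. \<forall>i\<le>n. canon_map_prop C (\<lambda>u. u \<in> Cov) X Xm n (horn n i)) \<and>
     (\<forall>n>k. \<forall>i\<le>n. canon_map_prop C (is_iso C) X Xm n (horn n i))"

definition fibration :: "('o,'m) cat \<Rightarrow> 'm set \<Rightarrow> (nat \<Rightarrow> 'o) \<Rightarrow> (nat \<Rightarrow> nat \<Rightarrow> (nat \<Rightarrow> nat) \<Rightarrow> 'm)
     \<Rightarrow> (nat \<Rightarrow> 'o) \<Rightarrow> (nat \<Rightarrow> nat \<Rightarrow> (nat \<Rightarrow> nat) \<Rightarrow> 'm) \<Rightarrow> (nat \<Rightarrow> 'm) \<Rightarrow> bool" where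
  "fibration C Cov X Xm Y Ym f \<longleftrightarrow>
     (\<forall>n>0. \<forall>i\<le>n. rel_map_prop C (\<lambda>u. u \<in> Cov) X Xm Y Ym f n (horn n i) (simplices n))"

definition hypercover :: "('o,'m) cat \<Rightarrow> 'm set \<Rightarrow> (nat \<Rightarrow> 'o) \<Rightarrow> (nat \<Rightarrow> nat \<Rightarrow> (nat \<Rightarrow> nat) \<Rightarrow> 'm)
     \<Rightarrow> (nat \<Rightarrow> 'o) \<Rightarrow> (nat \<Rightarrow> nat \<Rightarrow> (nat \<Rightarrow> nat) \<Rightarrow> 'm) \<Rightarrow> (nat \<Rightarrow> 'm) \<Rightarrow> bool" where
  "hypercover C Cov X Xm Y Ym f \<longleftrightarrow>
     (\<forall>n. rel_map_prop C (\<lambda>u. u \<in> Cov) X Xm Y Ym f n (boundary n) (simplices n))"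

end

theory Submission
  imports Defs
begin

text \<open>Write \<open>M(S, f)\<close> for \<open>Map(S \<hookrightarrow> \<Delta>\<^sup>m, f)\<close>. To show that the canonical map
  \<open>u : X\<^sub>n \<rightarrow> P = M(\<partial>\<Delta>\<^sup>n, f)\<close> is a cover
  it suffices, by the cancellation axiom, to find a cover \<open>c\<close> into \<open>X\<^sub>n\<close> such that \<open>u c\<close> is
  a cover. Over \<open>P\<close> we build a tower of three pullbacks of covers: an \<open>n\<close>-simplex \<open>x\<close>
  of \<open>X\<close> with the same image as the given point of \<open>P\<close> in \<open>M(\<partial>\<Delta>\<^sup>n, g f)\<close>
  (\<open>g f\<close> is a hypercover), an \<open>(n+1)\<close>-simplex \<open>y'\<close> of \<open>Y\<close> whose last face is the
  given one and whose other faces are those of \<open>s\<^sub>n (f x)\<close> (\<open>g\<close> is a hypercover), and an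
  \<open>(n+1)\<close>-simplex \<open>x'\<close> of \<open>X\<close> over \<open>y'\<close> filling the horn \<open>\<Lambda>\<^sup>n\<^sup>+\<^sup>1\<^sub>n\<^sub>+\<^sub>1\<close> of
  \<open>s\<^sub>n x\<close> (\<open>f\<close> is a fibration). With \<open>c\<close> the last face of \<open>x'\<close>, the composite \<open>u c\<close> is
  the projection of the tower to \<open>P\<close>, a cover. The same tower is also the pullback of the cover
  \<open>X\<^sub>n\<^sub>+\<^sub>1 \<rightarrow> M(\<partial>\<Delta>\<^sup>n\<^sup>+\<^sup>1, g f)\<close> over the kernel pair of \<open>X\<^sub>n \<rightarrow> M(\<partial>\<Delta>\<^sup>n, g f)\<close>,
  on which \<open>c\<close> is the second projection; hence \<open>c\<close> is a cover.\<close>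

section \<open>Simplices of \<open>\<Delta>\<^sup>n\<close>\<close>

lemma nth_sorted_list_of_set_card_less:
  assumes "finite A" "(x::nat) \<in> A"
  shows "sorted_list_of_set A ! card {y\<in>A. y < x} = x"
proof -
  define xs where "xs = sorted_list_of_set A"
  have sorted: "sorted_wrt (<) xs" and set_xs: "set xs = A" and "distinct xs"
    using assms(1) by (simp_all add: xs_def)
  obtain i where i: "i < length xs" "xs ! i = x"
    using assms(2) set_xs by (metis in_set_conv_nth)
  have "{y\<in>A. y < x} = (!) xs ` {..<i}"
  proof (intro set_eqI iffI)
    fix y assume "y \<in> {y\<in>A. y < x}"
    then obtain j where "j < length xs" "xs ! j = y" "y < x"
      using set_xs by (metis (mono_tags, lifting) in_set_conv_nth mem_Collect_eq)
    then have "j < i"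
      using i sorted by (metis linorder_neqE_nat not_less_iff_gr_or_eq sorted_wrt_nth_less)
    then show "y \<in> (!) xs ` {..<i}" using \<open>xs ! j = y\<close> by blast
  next
    fix y assume "y \<in> (!) xs ` {..<i}"
    then obtain j where "j < i" "y = xs ! j" by blast
    then show "y \<in> {y\<in>A. y < x}"
      using i sorted set_xs by (auto intro: sorted_wrt_nth_less)
  qed
  moreover have "inj_on ((!) xs) {..<i}"
    using \<open>distinct xs\<close> i(1) by (simp add: inj_on_def nth_eq_iff_index_eq)
  ultimately show ?thesis
    using i by (simp add: card_image xs_def)
qed

lemma incl_less_card:
  assumes "finite \<sigma>" "\<tau> \<subseteq> \<sigma>" "k < card \<tau>"
  shows "incl \<tau> \<sigma> k < card \<sigma>"
proof -
  have "sorted_list_of_set \<tau> ! k \<in> \<sigma>"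
    using assms by (metis finite_subset length_sorted_list_of_set nth_mem set_sorted_list_of_set subsetD)
  then show ?thesis
    unfolding incl_def using assms(1) by (intro psubset_card_mono) auto
qed

lemma nth_sorted_list_of_set_incl:
  assumes "finite \<sigma>" "\<tau> \<subseteq> \<sigma>" "k < card \<tau>"
  shows "sorted_list_of_set \<sigma> ! incl \<tau> \<sigma> k = sorted_list_of_set \<tau> ! k"
proof -
  have "sorted_list_of_set \<tau> ! k \<in> \<sigma>"
    using assms by (metis finite_subset length_sorted_list_of_set nth_mem set_sorted_list_of_set subsetD)
  then show ?thesis
    unfolding incl_def using nth_sorted_list_of_set_card_less assms(1) by blast
qed

lemma incl_mono:
  assumes "finite \<sigma>" "\<tau> \<subseteq> \<sigma>" "i \<le> j" "j < card \<tau>"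
  shows "incl \<tau> \<sigma> i \<le> incl \<tau> \<sigma> j"
proof -
  have "sorted_list_of_set \<tau> ! i \<le> sorted_list_of_set \<tau> ! j"
    using assms by (intro sorted_nth_mono) (auto intro: finite_subset)
  then show ?thesis
    unfolding incl_def using assms by (intro card_mono) auto
qed

lemma incl_atLeastAtMost:
  assumes "\<sigma> \<subseteq> {0..m}" "k < card \<sigma>"
  shows "incl \<sigma> {0..m} k = sorted_list_of_set \<sigma> ! k"
proof -
  have "sorted_list_of_set \<sigma> ! k \<in> \<sigma>"
    using assms by (metis finite_atLeastAtMost finite_subset length_sorted_list_of_set nth_mem
        set_sorted_list_of_set)
  then have "{x \<in> {0..m}. x < sorted_list_of_set \<sigma> ! k} = {0..<sorted_list_of_set \<sigma> ! k}"
    using assms(1) by auto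
  then show ?thesis
    unfolding incl_def by simp
qed

lemma le_sdim_iff: "\<sigma> \<noteq> {} \<Longrightarrow> finite \<sigma> \<Longrightarrow> k \<le> sdim \<sigma> \<longleftrightarrow> k < card \<sigma>"
  unfolding sdim_def by (metis One_nat_def Suc_pred card_gt_0_iff less_Suc_eq_le)

lemma sdim_atLeastAtMost [simp]: "sdim {0..m} = m"
  unfolding sdim_def by simp

lemma mono_map_incl:
  assumes "finite \<sigma>" "\<tau> \<subseteq> \<sigma>" "\<tau> \<noteq> {}"
  shows "mono_map (sdim \<tau>) (sdim \<sigma>) (incl \<tau> \<sigma>)"
proof -
  have "\<sigma> \<noteq> {}" "finite \<tau>"
    using assms finite_subset by auto
  then show ?thesis
    unfolding mono_map_def using assms by (auto simp: le_sdim_iff incl_less_card incl_mono)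
qed

lemma simplicesD: "\<sigma> \<in> simplices m \<Longrightarrow> \<sigma> \<subseteq> {0..m} \<and> \<sigma> \<noteq> {} \<and> finite \<sigma>"
  unfolding simplices_def using finite_subset by auto

lemma top_simplex: "{0..m} \<in> simplices m"
  unfolding simplices_def by auto

lemma mono_map_leg: "\<sigma> \<in> simplices m \<Longrightarrow> mono_map (sdim \<sigma>) m (incl \<sigma> {0..m})"
  using mono_map_incl[of "{0..m}" \<sigma>] simplicesD by fastforce

lemma incl_atLeastAtMost_simplex:
  assumes "\<sigma> \<in> simplices m" "i \<le> sdim \<sigma>"
  shows "incl \<sigma> {0..m} i = sorted_list_of_set \<sigma> ! i"
proof -
  have "\<sigma> \<subseteq> {0..m}" "i < card \<sigma>"
    using assms simplicesD le_sdim_iff by auto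
  then show ?thesis
    by (rule incl_atLeastAtMost)
qed

lemma nth_sorted_list_of_set_le:
  assumes "\<sigma> \<in> simplices m" "i \<le> sdim \<sigma>"
  shows "sorted_list_of_set \<sigma> ! i \<le> m"
proof -
  have "incl \<sigma> {0..m} i \<le> m"
    using mono_map_leg[OF assms(1)] assms(2) unfolding mono_map_def by blast
  then show ?thesis
    using incl_atLeastAtMost_simplex[OF assms] by simp
qed

lemma nth_sorted_list_of_set_atLeastAtMost: "i \<le> m \<Longrightarrow> sorted_list_of_set {0..m::nat} ! i = i"
  by (simp add: nth_append flip: atLeastLessThanSuc_atLeastAtMost)

lemma mono_map_face:
  assumes "\<sigma> \<in> simplices m" "\<tau> \<in> simplices m" "\<tau> \<subseteq> \<sigma>"
  shows "mono_map (sdim \<tau>) (sdim \<sigma>) (incl \<tau> \<sigma>)"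
proof (rule mono_map_incl)
  show "finite \<sigma>" "\<tau> \<noteq> {}"
    using assms(1,2) simplicesD by auto
qed (rule assms(3))

lemma finite_simplices: "finite (simplices m)"
  unfolding simplices_def by (rule finite_subset[of _ "Pow {0..m}"]) auto

lemma boundary_subset_simplices: "boundary m \<subseteq> simplices m"
  unfolding boundary_def by blast

lemma horn_subset_boundary: "horn (Suc n) (Suc n) \<subseteq> boundary (Suc n)"
  unfolding horn_def boundary_def by auto

lemma boundary_simplices: "\<sigma> \<in> boundary m \<Longrightarrow> \<sigma> \<in> simplices m"
  using boundary_subset_simplices by blast

lemma horn_simplices: "\<sigma> \<in> horn (Suc n) (Suc n) \<Longrightarrow> \<sigma> \<in> simplices (Suc n)"
  using horn_subset_boundary boundary_subset_simplices by blast

lemma simplices_subset_Suc: "simplices n \<subseteq> simplices (Suc n)"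
  unfolding simplices_def by auto

lemma simplices_in_boundary_Suc: "\<sigma> \<in> simplices n \<Longrightarrow> \<sigma> \<in> boundary (Suc n)"
  unfolding simplices_def boundary_def by auto

lemma boundary_Suc_not_last:
  "\<sigma> \<in> boundary (Suc n) \<Longrightarrow> Suc n \<notin> \<sigma> \<Longrightarrow> \<sigma> \<in> simplices n"
  unfolding boundary_def simplices_def by (auto simp: le_Suc_eq)

lemma boundary_in_horn_Suc: "\<sigma> \<in> boundary n \<Longrightarrow> \<sigma> \<in> horn (Suc n) (Suc n)"
  unfolding boundary_def simplices_def horn_def by (auto simp: subset_iff) (metis Suc_n_not_le_n le_SucI)

lemma horn_not_last:
  "\<sigma> \<in> horn (Suc n) (Suc n) \<Longrightarrow> Suc n \<notin> \<sigma> \<Longrightarrow> \<sigma> \<in> boundary n"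
  unfolding boundary_def simplices_def horn_def by (auto simp: subset_iff le_Suc_eq)

lemma boundary_Suc_last_in_horn:
  "\<sigma> \<in> boundary (Suc n) \<Longrightarrow> Suc n \<in> \<sigma> \<Longrightarrow> \<sigma> \<in> horn (Suc n) (Suc n)"
  unfolding boundary_def simplices_def horn_def by (auto simp: subset_iff)

lemma boundary_Suc_overlap:
  assumes "\<tau> \<in> boundary (Suc n)" "Suc n \<notin> \<tau>" "\<sigma> \<in> boundary (Suc n)" "Suc n \<in> \<sigma>" "\<tau> \<subseteq> \<sigma>"
  shows "\<tau> \<in> boundary n"
  using assms unfolding boundary_def simplices_def
  by (auto simp: subset_iff le_Suc_eq)

section \<open>Categories with covers\<close>

locale category =
  fixes C :: "('o,'m) cat"
  assumes category: "is_category C"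
begin

abbreviation comp (infixr "\<cdot>" 70) where "g \<cdot> f \<equiv> Cmp C g f"

lemma hom_objects: "f \<in> hom C a b \<Longrightarrow> a \<in> Ob C \<and> b \<in> Ob C"
  using category unfolding is_category_def hom_def by blast

lemma hom_comp: "f \<in> hom C a b \<Longrightarrow> g \<in> hom C b c \<Longrightarrow> g \<cdot> f \<in> hom C a c"
  using category unfolding is_category_def by (simp add: hom_def)

lemma comp_assoc:
  "f \<in> hom C a b \<Longrightarrow> g \<in> hom C b c \<Longrightarrow> h \<in> hom C c d \<Longrightarrow> (h \<cdot> g) \<cdot> f = h \<cdot> (g \<cdot> f)"
  using category unfolding is_category_def by (simp add: hom_def)

lemma id_hom: "a \<in> Ob C \<Longrightarrow> Idt C a \<in> hom C a a"
  using category unfolding is_category_def by blast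

lemma comp_id_left: "f \<in> hom C a b \<Longrightarrow> Idt C b \<cdot> f = f"
  using category unfolding is_category_def hom_def by auto

lemma comp_id_right: "f \<in> hom C a b \<Longrightarrow> f \<cdot> Idt C a = f"
  using category unfolding is_category_def hom_def by auto

lemma comp_Ar: "f \<in> Ar C \<Longrightarrow> g \<in> Ar C \<Longrightarrow> Cod C f = Dom C g \<Longrightarrow> g \<cdot> f \<in> Ar C"
  and comp_Dom: "f \<in> Ar C \<Longrightarrow> g \<in> Ar C \<Longrightarrow> Cod C f = Dom C g \<Longrightarrow> Dom C (g \<cdot> f) = Dom C f"
  and comp_Cod: "f \<in> Ar C \<Longrightarrow> g \<in> Ar C \<Longrightarrow> Cod C f = Dom C g \<Longrightarrow> Cod C (g \<cdot> f) = Cod C g"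
  and comp_assoc_Ar: "f \<in> Ar C \<Longrightarrow> g \<in> Ar C \<Longrightarrow> h \<in> Ar C \<Longrightarrow> Cod C f = Dom C g \<Longrightarrow>
    Cod C g = Dom C h \<Longrightarrow> (h \<cdot> g) \<cdot> f = h \<cdot> (g \<cdot> f)"
  using hom_comp[of f "Dom C f" "Cod C f" g "Cod C g"] comp_assoc[of f _ _ g _ h "Cod C h"]
  unfolding hom_def by auto

lemmas comp_simps = comp_Ar comp_Dom comp_Cod comp_assoc_Ar hom_def

lemmas comp_simps_left = comp_Ar comp_Dom comp_Cod comp_assoc_Ar[symmetric] hom_def

lemma pullback_hom:
  "is_pullback C f g P p1 p2 \<Longrightarrow>
    p1 \<in> hom C P (Dom C f) \<and> p2 \<in> hom C P (Dom C g) \<and> f \<cdot> p1 = g \<cdot> p2 \<and> P \<in> Ob C"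
  unfolding is_pullback_def using hom_objects by blast

lemma pullback_lift:
  assumes "is_pullback C f g P p1 p2" "q1 \<in> hom C Q (Dom C f)" "q2 \<in> hom C Q (Dom C g)"
    "f \<cdot> q1 = g \<cdot> q2"
  obtains t where "t \<in> hom C Q P" "p1 \<cdot> t = q1" "p2 \<cdot> t = q2"
  using assms unfolding is_pullback_def by metis

lemma pullback_eqI:
  assumes pb: "is_pullback C f g P p1 p2" and t: "t \<in> hom C Q P" "t' \<in> hom C Q P"
    and eq: "p1 \<cdot> t = p1 \<cdot> t'" "p2 \<cdot> t = p2 \<cdot> t'"
  shows "t = t'"
proof -
  have p: "p1 \<in> hom C P (Dom C f)" "p2 \<in> hom C P (Dom C g)" "f \<cdot> p1 = g \<cdot> p2"
    and fg: "f \<in> hom C (Dom C f) (Cod C f)" "g \<in> hom C (Dom C g) (Cod C f)"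
    using pb unfolding is_pullback_def hom_def by auto
  have "f \<cdot> (p1 \<cdot> t) = g \<cdot> (p2 \<cdot> t)"
    using comp_assoc[OF t(1) p(1) fg(1)] comp_assoc[OF t(1) p(2) fg(2)] p(3) by simp
  then show ?thesis
    using pb t eq hom_comp[OF _ p(1)] hom_comp[OF _ p(2)] unfolding is_pullback_def by metis
qed

lemma is_cone_reindex:
  assumes e: "bij_betw e N I" and E: "\<forall>(i, j, m)\<in>E. i \<in> I \<and> j \<in> I"
    and q: "\<forall>n\<in>N. q' n = q (e n)"
  shows "is_cone C N (D \<circ> e) {(a, b, m). a \<in> N \<and> b \<in> N \<and> (e a, e b, m) \<in> E} L q' \<longleftrightarrow>
    is_cone C I D E L q"
proof -
  have I: "I = e ` N"
    using e by (simp add: bij_betw_def)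
  have "(\<forall>n\<in>N. q' n \<in> hom C L ((D \<circ> e) n)) \<longleftrightarrow> (\<forall>i\<in>I. q i \<in> hom C L (D i))"
    using q I by auto
  moreover have "(\<forall>(a, b, m)\<in>{(a, b, m). a \<in> N \<and> b \<in> N \<and> (e a, e b, m) \<in> E}. m \<cdot> q' a = q' b)
      \<longleftrightarrow> (\<forall>(i, j, m)\<in>E. m \<cdot> q i = q j)" (is "?N \<longleftrightarrow> ?I")
  proof
    assume ?N
    show ?I
    proof (clarify)
      fix i j m assume "(i, j, m) \<in> E"
      moreover from this obtain a b where "a \<in> N" "b \<in> N" "i = e a" "j = e b"
        using E I by blast
      ultimately show "m \<cdot> q i = q j"
        using \<open>?N\<close> q by fastforce
    qed
  qed (use q in auto)
  ultimately show ?thesis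
    unfolding is_cone_def by (simp only:)
qed

lemma is_limit_reindex:
  assumes e: "bij_betw e N I" and E: "\<forall>(i, j, m)\<in>E. i \<in> I \<and> j \<in> I"
    and "is_limit C N (D \<circ> e) {(a, b, m). a \<in> N \<and> b \<in> N \<and> (e a, e b, m) \<in> E} L p'"
    and p': "\<forall>n\<in>N. p' n = p (e n)"
  shows "is_limit C I D E L p"
proof -
  define E' where "E' = {(a, b, m). a \<in> N \<and> b \<in> N \<and> (e a, e b, m) \<in> E}"
  have lim: "is_limit C N (D \<circ> e) E' L p'"
    using assms(3) unfolding E'_def .
  note cone = is_cone_reindex[OF e E, folded E'_def]
  show ?thesis
    unfolding is_limit_def
  proof (intro conjI allI impI)
    show "is_cone C I D E L p"
      using lim cone[OF p'] unfolding is_limit_def by blast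
  next
    fix L' q assume "is_cone C I D E L' q"
    then have "is_cone C N (D \<circ> e) E' L' (q \<circ> e)"
      using cone[of "q \<circ> e" q] by simp
    then obtain t where t: "t \<in> hom C L' L" "\<forall>n\<in>N. p' n \<cdot> t = q (e n)"
      and uniq: "\<And>t'. t' \<in> hom C L' L \<Longrightarrow> \<forall>n\<in>N. p' n \<cdot> t' = q (e n) \<Longrightarrow> t' = t"
      using lim unfolding is_limit_def by (metis comp_apply)
    have char: "(\<forall>i\<in>I. p i \<cdot> t' = q i) \<longleftrightarrow> (\<forall>n\<in>N. p' n \<cdot> t' = q (e n))" for t'
      using e p' unfolding bij_betw_def by force
    show "\<exists>!t. t \<in> hom C L' L \<and> (\<forall>i\<in>I. p i \<cdot> t = q i)"
    proof (rule ex1I[of _ t])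
      fix t' assume "t' \<in> hom C L' L \<and> (\<forall>i\<in>I. p i \<cdot> t' = q i)"
      then show "t' = t"
        using uniq[of t'] char[of t'] by blast
    qed (use t char in blast)
  qed
qed

lemma cospan_limit_is_pullback:
  assumes f: "f \<in> hom C A B" and g: "g \<in> hom C A' B"
    and "is_limit C {0, 1, 2} (\<lambda>i::nat. if i = 0 then A else if i = 1 then A' else B)
      {(0, 2, f), (1, 2, g)} L p"
  shows "is_pullback C f g L (p 0) (p 1)"
proof -
  define D where "D = (\<lambda>i::nat. if i = 0 then A else if i = 1 then A' else B)"
  define E where "E = {(0::nat, 2::nat, f), (1, 2, g)}"
  have lim: "is_limit C {0, 1, 2} D E L p"
    using assms(3) unfolding D_def E_def .
  then have "is_cone C {0, 1, 2} D E L p"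
    unfolding is_limit_def by blast
  then have p: "p 0 \<in> hom C L A" "p 1 \<in> hom C L A'" "p 2 = f \<cdot> p 0" "g \<cdot> p 1 = p 2"
    unfolding is_cone_def D_def E_def by simp_all
  have fg: "f \<in> Ar C" "g \<in> Ar C" "Dom C f = A" "Dom C g = A'" "Cod C f = B" "Cod C g = B"
    using f g unfolding hom_def by auto
  show ?thesis
    unfolding is_pullback_def
  proof (intro conjI allI impI)
    fix Q q1 q2 assume "q1 \<in> hom C Q (Dom C f) \<and> q2 \<in> hom C Q (Dom C g) \<and> f \<cdot> q1 = g \<cdot> q2"
    then have q: "q1 \<in> hom C Q A" "q2 \<in> hom C Q A'" "f \<cdot> q1 = g \<cdot> q2"
      using fg by simp_all
    define q where "q = (\<lambda>i::nat. if i = 0 then q1 else if i = 1 then q2 else f \<cdot> q1)"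
    have "is_cone C {0, 1, 2} D E Q q"
      unfolding is_cone_def D_def E_def q_def
      using q hom_objects[OF q(1)] hom_comp[OF q(1) f] by simp
    then obtain t where t: "t \<in> hom C Q L" "\<forall>i\<in>{0, 1, 2}. p i \<cdot> t = q i"
      and uniq: "\<And>t'. t' \<in> hom C Q L \<Longrightarrow> \<forall>i\<in>{0, 1, 2}. p i \<cdot> t' = q i \<Longrightarrow> t' = t"
      using lim unfolding is_limit_def by metis
    have char: "(\<forall>i\<in>{0, 1, 2}. p i \<cdot> t' = q i) \<longleftrightarrow> p 0 \<cdot> t' = q1 \<and> p 1 \<cdot> t' = q2"
      if "t' \<in> hom C Q L" for t'
      using comp_assoc[OF that p(1) f] p(3) unfolding q_def by auto
    show "\<exists>!t. t \<in> hom C Q L \<and> p 0 \<cdot> t = q1 \<and> p 1 \<cdot> t = q2"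
    proof (rule ex1I[of _ t])
      show "t \<in> hom C Q L \<and> p 0 \<cdot> t = q1 \<and> p 1 \<cdot> t = q2"
        using t char[OF t(1)] by simp
    next
      fix t' assume "t' \<in> hom C Q L \<and> p 0 \<cdot> t' = q1 \<and> p 1 \<cdot> t' = q2"
      then show "t' = t"
        using uniq[of t'] char[of t'] by blast
    qed
  qed (use p fg in simp_all)
qed

end

locale descent_cat =
  fixes C :: "('o,'m) cat" and Cov :: "'m set"
  assumes descent: "descent_category C Cov"

sublocale descent_cat \<subseteq> category
  using descent unfolding descent_category_def by unfold_locales blast

context descent_cat
begin

lemma cover_comp:
  assumes "f \<in> Cov" "g \<in> Cov" "f \<in> hom C a b" "g \<in> hom C b c"
  shows "g \<cdot> f \<in> Cov"
proof -
  have "Cod C f = Dom C g"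
    using assms(3,4) by (simp add: hom_def)
  then show ?thesis
    using assms(1,2) descent unfolding descent_category_def by blast
qed

lemma cover_pullback: "f \<in> Cov \<Longrightarrow> is_pullback C f g P p1 p2 \<Longrightarrow> p2 \<in> Cov"
  using descent unfolding descent_category_def by blast

lemma cover_cancel:
  assumes "f \<in> Cov" "f \<in> hom C a b" "g \<in> hom C b c" "g \<cdot> f \<in> Cov"
  shows "g \<in> Cov"
proof -
  have "g \<in> Ar C" "Cod C f = Dom C g"
    using assms(2,3) by (simp_all add: hom_def)
  then show ?thesis
    using assms(1,4) descent unfolding descent_category_def by blast
qed

text \<open>\<open>has_finite_limits\<close> only speaks about diagrams indexed by natural numbers; a finite
  diagram with any index type is transported along a bijection with an initial segment.\<close>

lemma finite_limit_exists:
  assumes I: "finite I" and E: "finite E" and D: "is_diagram C I D E"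
  shows "\<exists>L p. is_limit C I D E L p"
proof -
  obtain e where e: "bij_betw e {0..<card I} I"
    using ex_bij_betw_nat_finite[OF I] by blast
  define N where "N = {0..<card I}"
  define E' where "E' = {(a, b, m). a \<in> N \<and> b \<in> N \<and> (e a, e b, m) \<in> E}"
  have e: "bij_betw e N I" and EI: "\<forall>(i, j, m)\<in>E. i \<in> I \<and> j \<in> I"
    using e D unfolding N_def is_diagram_def by auto
  have "inj_on (\<lambda>(a, b, m). (e a, e b, m)) E'" "(\<lambda>(a, b, m). (e a, e b, m)) ` E' \<subseteq> E"
    using e unfolding E'_def inj_on_def bij_betw_def by auto
  then have "finite E'"
    using E finite_subset finite_imageD by metis
  moreover have "is_diagram C N (D \<circ> e) E'"
    using D e unfolding is_diagram_def E'_def bij_betw_def by auto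
  ultimately obtain L p' where lim: "is_limit C N (D \<circ> e) E' L p'"
    using descent unfolding descent_category_def has_finite_limits_def N_def by blast
  have "is_limit C I D E L (p' \<circ> inv_into N e)"
    by (rule is_limit_reindex[OF e EI lim[unfolded E'_def]]) (use e in \<open>simp add: bij_betw_def\<close>)
  then show ?thesis
    by blast
qed

lemma pullback_exists:
  assumes f: "f \<in> hom C A B" and g: "g \<in> hom C A' B"
  shows "\<exists>P p1 p2. is_pullback C f g P p1 p2"
proof -
  have "A \<in> Ob C" "A' \<in> Ob C" "B \<in> Ob C"
    using hom_objects f g by blast+
  then have "is_diagram C {0, 1, 2} (\<lambda>i::nat. if i = 0 then A else if i = 1 then A' else B)
      {(0, 2, f), (1, 2, g)}"
    unfolding is_diagram_def using f g by simp
  then have "\<exists>L p. is_limit C {0, 1, 2} (\<lambda>i::nat. if i = 0 then A else if i = 1 then A' else B)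
      {(0, 2, f), (1, 2, g)} L p"
    by (rule finite_limit_exists[rotated 2]) simp_all
  then show ?thesis
    using cospan_limit_is_pullback[OF f g] by blast
qed

end

definition pullback_obj :: "('o,'m) cat \<Rightarrow> 'm \<Rightarrow> 'm \<Rightarrow> 'o" where
  "pullback_obj C f g = fst (SOME t. is_pullback C f g (fst t) (fst (snd t)) (snd (snd t)))"

definition pullback_fst :: "('o,'m) cat \<Rightarrow> 'm \<Rightarrow> 'm \<Rightarrow> 'm" where
  "pullback_fst C f g = fst (snd (SOME t. is_pullback C f g (fst t) (fst (snd t)) (snd (snd t))))"

definition pullback_snd :: "('o,'m) cat \<Rightarrow> 'm \<Rightarrow> 'm \<Rightarrow> 'm" where
  "pullback_snd C f g = snd (snd (SOME t. is_pullback C f g (fst t) (fst (snd t)) (snd (snd t))))"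

lemma (in descent_cat) is_pullback_chosen:
  assumes "f \<in> hom C A B" "g \<in> hom C A' B"
  shows "is_pullback C f g (pullback_obj C f g) (pullback_fst C f g) (pullback_snd C f g)"
proof -
  have "\<exists>t. is_pullback C f g (fst t) (fst (snd t)) (snd (snd t))"
    using pullback_exists[OF assms] by auto
  from someI_ex[OF this] show ?thesis
    unfolding pullback_obj_def pullback_fst_def pullback_snd_def .
qed

section \<open>Simplicial objects\<close>

definition last_face :: "(nat \<Rightarrow> nat \<Rightarrow> (nat \<Rightarrow> nat) \<Rightarrow> 'm) \<Rightarrow> nat \<Rightarrow> 'm" where
  "last_face Xm n = Xm n (Suc n) (\<lambda>i. i)"

definition last_degen :: "(nat \<Rightarrow> nat \<Rightarrow> (nat \<Rightarrow> nat) \<Rightarrow> 'm) \<Rightarrow> nat \<Rightarrow> 'm" where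
  "last_degen Xm n = Xm (Suc n) n (\<lambda>i. min i n)"

context category
begin

context
  fixes X :: "nat \<Rightarrow> 'o" and Xm
  assumes X: "is_simplicial C X Xm"
begin

lemma simplicial_hom: "mono_map n m \<alpha> \<Longrightarrow> Xm n m \<alpha> \<in> hom C (X m) (X n)"
  using X unfolding is_simplicial_def by blast

lemma simplicial_comp:
  assumes "mono_map n m \<alpha>" "mono_map m l \<beta>" "\<And>i. i \<le> n \<Longrightarrow> \<beta> (\<alpha> i) = \<gamma> i"
  shows "Xm n m \<alpha> \<cdot> Xm m l \<beta> = Xm n l \<gamma>"
proof -
  have "mono_map n l (\<beta> \<circ> \<alpha>)"
    using assms(1,2) unfolding mono_map_def by auto
  then have "Xm n l (\<beta> \<circ> \<alpha>) = Xm n l \<gamma>"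
    using X assms(3) unfolding is_simplicial_def by simp
  then show ?thesis
    using X assms(1,2) unfolding is_simplicial_def by metis
qed

lemma simplicial_id: "(\<And>i. i \<le> n \<Longrightarrow> \<alpha> i = i) \<Longrightarrow> Xm n n \<alpha> = Idt C (X n)"
proof -
  assume "\<And>i. i \<le> n \<Longrightarrow> \<alpha> i = i"
  moreover have "mono_map n n id"
    unfolding mono_map_def by simp
  ultimately show ?thesis
    using X unfolding is_simplicial_def by (metis id_apply)
qed

lemma leg_hom: "\<sigma> \<in> simplices m \<Longrightarrow> leg Xm m \<sigma> \<in> hom C (X m) (X (sdim \<sigma>))"
  unfolding leg_def by (intro simplicial_hom mono_map_leg)

lemma face_hom:
  "\<sigma> \<in> simplices m \<Longrightarrow> \<tau> \<in> simplices m \<Longrightarrow> \<tau> \<subseteq> \<sigma> \<Longrightarrow>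
    Xm (sdim \<tau>) (sdim \<sigma>) (incl \<tau> \<sigma>) \<in> hom C (X (sdim \<sigma>)) (X (sdim \<tau>))"
  by (intro simplicial_hom mono_map_face)

lemma leg_face:
  assumes \<sigma>: "\<sigma> \<in> simplices m" and \<tau>: "\<tau> \<in> simplices m" and "\<tau> \<subseteq> \<sigma>"
  shows "Xm (sdim \<tau>) (sdim \<sigma>) (incl \<tau> \<sigma>) \<cdot> leg Xm m \<sigma> = leg Xm m \<tau>"
  unfolding leg_def
proof (rule simplicial_comp)
  show face: "mono_map (sdim \<tau>) (sdim \<sigma>) (incl \<tau> \<sigma>)"
    using assms by (rule mono_map_face)
  show "mono_map (sdim \<sigma>) m (incl \<sigma> {0..m})"
    using \<sigma> by (rule mono_map_leg)
  fix i assume i: "i \<le> sdim \<tau>"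
  then have "incl \<tau> \<sigma> i \<le> sdim \<sigma>"
    using face unfolding mono_map_def by blast
  moreover have "finite \<sigma>" "i < card \<tau>"
    using \<sigma> \<tau> i simplicesD le_sdim_iff by auto
  ultimately show "incl \<sigma> {0..m} (incl \<tau> \<sigma> i) = incl \<tau> {0..m} i"
    using assms i by (simp add: incl_atLeastAtMost_simplex nth_sorted_list_of_set_incl)
qed

lemma leg_top: "leg Xm m {0..m} = Idt C (X m)"
  unfolding leg_def sdim_atLeastAtMost
  by (rule simplicial_id) (simp add: incl_atLeastAtMost_simplex[OF top_simplex] nth_sorted_list_of_set_atLeastAtMost)

lemma leg_last_face:
  assumes "\<sigma> \<in> simplices n"
  shows "leg Xm n \<sigma> \<cdot> last_face Xm n = leg Xm (Suc n) \<sigma>"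
  unfolding leg_def last_face_def
proof (rule simplicial_comp)
  show "mono_map (sdim \<sigma>) n (incl \<sigma> {0..n})"
    using assms by (rule mono_map_leg)
  show "mono_map n (Suc n) (\<lambda>i. i)"
    unfolding mono_map_def by auto
  show "incl \<sigma> {0..n} i = incl \<sigma> {0..Suc n} i" if "i \<le> sdim \<sigma>" for i
    using that assms subsetD[OF simplices_subset_Suc assms] by (simp add: incl_atLeastAtMost_simplex)
qed

lemma leg_last_degen:
  assumes "\<sigma> \<in> simplices n"
  shows "leg Xm (Suc n) \<sigma> \<cdot> last_degen Xm n = leg Xm n \<sigma>"
  unfolding leg_def last_degen_def
proof (rule simplicial_comp)
  show "mono_map (sdim \<sigma>) (Suc n) (incl \<sigma> {0..Suc n})"
    using subsetD[OF simplices_subset_Suc assms] by (rule mono_map_leg)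
  show "mono_map (Suc n) n (\<lambda>i. min i n)"
    unfolding mono_map_def by auto
  show "min (incl \<sigma> {0..Suc n} i) n = incl \<sigma> {0..n} i" if "i \<le> sdim \<sigma>" for i
    using that assms subsetD[OF simplices_subset_Suc assms] nth_sorted_list_of_set_le[OF assms that]
    by (simp add: incl_atLeastAtMost_simplex)
qed

lemma last_face_hom: "last_face Xm n \<in> hom C (X (Suc n)) (X n)"
  unfolding last_face_def by (rule simplicial_hom) (simp add: mono_map_def)

lemma last_degen_hom: "last_degen Xm n \<in> hom C (X n) (X (Suc n))"
  unfolding last_degen_def by (rule simplicial_hom) (auto simp: mono_map_def)

lemma leg_Suc_top: "leg Xm (Suc n) {0..n} = last_face Xm n"
  using leg_last_face[OF top_simplex] leg_top comp_id_left[OF last_face_hom] by simp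

lemma leg_last_degen_comp:
  "\<sigma> \<in> simplices n \<Longrightarrow> x \<in> hom C W (X n) \<Longrightarrow>
    leg Xm (Suc n) \<sigma> \<cdot> (last_degen Xm n \<cdot> x) = leg Xm n \<sigma> \<cdot> x"
  using comp_assoc[OF _ last_degen_hom leg_hom, of x W n \<sigma>] leg_last_degen
    subsetD[OF simplices_subset_Suc] by simp

end

end

section \<open>Compatible families\<close>

definition compatible_family :: "('o,'m) cat \<Rightarrow> (nat \<Rightarrow> 'o) \<Rightarrow> (nat \<Rightarrow> nat \<Rightarrow> (nat \<Rightarrow> nat) \<Rightarrow> 'm)
    \<Rightarrow> nat set set \<Rightarrow> 'o \<Rightarrow> (nat set \<Rightarrow> 'm) \<Rightarrow> bool" where
  "compatible_family C X Xm S W F \<longleftrightarrow> (\<forall>\<sigma>\<in>S. F \<sigma> \<in> hom C W (X (sdim \<sigma>))) \<and>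
     (\<forall>\<sigma>\<in>S. \<forall>\<tau>\<in>S. \<tau> \<subseteq> \<sigma> \<longrightarrow> Cmp C (Xm (sdim \<tau>) (sdim \<sigma>) (incl \<tau> \<sigma>)) (F \<sigma>) = F \<tau>)"

definition glued_boundary :: "('o,'m) cat \<Rightarrow> (nat \<Rightarrow> nat \<Rightarrow> (nat \<Rightarrow> nat) \<Rightarrow> 'm) \<Rightarrow> nat \<Rightarrow> 'm \<Rightarrow> 'm
    \<Rightarrow> nat set \<Rightarrow> 'm" where
  "glued_boundary C Xm n x0 x1 \<sigma> =
     (if Suc n \<in> \<sigma> then Cmp C (leg Xm (Suc n) \<sigma>) (Cmp C (last_degen Xm n) x0)
      else Cmp C (leg Xm n \<sigma>) x1)"

lemma compatible_family_subset:
  "compatible_family C X Xm S W F \<Longrightarrow> S' \<subseteq> S \<Longrightarrow> compatible_family C X Xm S' W F"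
  unfolding compatible_family_def by (meson subsetD)

lemma compatible_family_cong:
  "compatible_family C X Xm S W F \<Longrightarrow> (\<And>\<sigma>. \<sigma> \<in> S \<Longrightarrow> G \<sigma> = F \<sigma>) \<Longrightarrow> compatible_family C X Xm S W G"
  unfolding compatible_family_def by simp

context category
begin

context
  fixes X :: "nat \<Rightarrow> 'o" and Xm
  assumes X: "is_simplicial C X Xm"
begin

lemma compatible_family_comp:
  assumes S: "S \<subseteq> simplices m" and F: "compatible_family C X Xm S W F" and r: "r \<in> hom C W' W"
  shows "compatible_family C X Xm S W' (\<lambda>\<sigma>. F \<sigma> \<cdot> r)"
  unfolding compatible_family_def
proof (intro conjI ballI impI)
  fix \<sigma> assume "\<sigma> \<in> S"
  then have "F \<sigma> \<in> hom C W (X (sdim \<sigma>))"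
    using F unfolding compatible_family_def by blast
  then show "F \<sigma> \<cdot> r \<in> hom C W' (X (sdim \<sigma>))"
    by (rule hom_comp[OF r])
next
  fix \<sigma> \<tau> assume "\<sigma> \<in> S" "\<tau> \<in> S" "\<tau> \<subseteq> \<sigma>"
  then have "F \<sigma> \<in> hom C W (X (sdim \<sigma>))" "Xm (sdim \<tau>) (sdim \<sigma>) (incl \<tau> \<sigma>) \<cdot> F \<sigma> = F \<tau>"
    and "Xm (sdim \<tau>) (sdim \<sigma>) (incl \<tau> \<sigma>) \<in> hom C (X (sdim \<sigma>)) (X (sdim \<tau>))"
    using F S face_hom[OF X, of \<sigma> m \<tau>] unfolding compatible_family_def by auto
  then show "Xm (sdim \<tau>) (sdim \<sigma>) (incl \<tau> \<sigma>) \<cdot> (F \<sigma> \<cdot> r) = F \<tau> \<cdot> r"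
    using comp_assoc[OF r] by metis
qed

lemma compatible_family_legs:
  assumes S: "S \<subseteq> simplices m" and x: "x \<in> hom C W (X m)"
  shows "compatible_family C X Xm S W (\<lambda>\<sigma>. leg Xm m \<sigma> \<cdot> x)"
  unfolding compatible_family_def
proof (intro conjI ballI impI)
  fix \<sigma> assume "\<sigma> \<in> S"
  then show "leg Xm m \<sigma> \<cdot> x \<in> hom C W (X (sdim \<sigma>))"
    using S by (intro hom_comp[OF x] leg_hom[OF X]) blast
next
  fix \<sigma> \<tau> assume "\<sigma> \<in> S" "\<tau> \<in> S" "\<tau> \<subseteq> \<sigma>"
  then have \<sigma>: "\<sigma> \<in> simplices m" and \<tau>: "\<tau> \<in> simplices m" and "\<tau> \<subseteq> \<sigma>"
    using S by auto
  then show "Xm (sdim \<tau>) (sdim \<sigma>) (incl \<tau> \<sigma>) \<cdot> (leg Xm m \<sigma> \<cdot> x) = leg Xm m \<tau> \<cdot> x"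
    using comp_assoc[OF x leg_hom[OF X \<sigma>] face_hom[OF X \<sigma> \<tau>]] leg_face[OF X \<sigma> \<tau>] by simp
qed

lemma compatible_family_leg:
  assumes S: "S \<subseteq> simplices m"
  shows "compatible_family C X Xm S (X m) (leg Xm m)"
proof -
  have "X m \<in> Ob C"
    using X unfolding is_simplicial_def by blast
  then have "compatible_family C X Xm S (X m) (\<lambda>\<sigma>. leg Xm m \<sigma> \<cdot> Idt C (X m))"
    by (rule compatible_family_legs[OF S id_hom])
  then show ?thesis
    by (rule compatible_family_cong) (simp add: comp_id_right[OF leg_hom[OF X subsetD[OF S]]])
qed

lemma compatible_family_simplices:
  assumes "compatible_family C X Xm (simplices m) W F" "\<sigma> \<in> simplices m"
  shows "F \<sigma> = leg Xm m \<sigma> \<cdot> F {0..m}"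
  using assms top_simplex[of m] simplicesD[OF assms(2)]
  unfolding compatible_family_def leg_def by (metis sdim_atLeastAtMost)

lemma glued_boundary_hom:
  assumes "\<sigma> \<in> boundary (Suc n)" "x0 \<in> hom C W (X n)" "x1 \<in> hom C W (X n)"
  shows "glued_boundary C Xm n x0 x1 \<sigma> \<in> hom C W (X (sdim \<sigma>))"
proof (cases "Suc n \<in> \<sigma>")
  case True
  have "leg Xm (Suc n) \<sigma> \<cdot> (last_degen Xm n \<cdot> x0) \<in> hom C W (X (sdim \<sigma>))"
    using assms(1) boundary_subset_simplices
    by (intro hom_comp[OF hom_comp[OF assms(2) last_degen_hom[OF X]]] leg_hom[OF X]) blast
  then show ?thesis
    using True unfolding glued_boundary_def by simp
next
  case False
  have "leg Xm n \<sigma> \<cdot> x1 \<in> hom C W (X (sdim \<sigma>))"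
    using boundary_Suc_not_last[OF assms(1) False] by (intro hom_comp[OF assms(3)] leg_hom[OF X])
  then show ?thesis
    using False unfolding glued_boundary_def by simp
qed

lemma glued_boundary_compatible:
  assumes x: "x0 \<in> hom C W (X n)" "x1 \<in> hom C W (X n)"
    and eq: "\<And>\<sigma>. \<sigma> \<in> boundary n \<Longrightarrow> leg Xm n \<sigma> \<cdot> x0 = leg Xm n \<sigma> \<cdot> x1"
  shows "compatible_family C X Xm (boundary (Suc n)) W (glued_boundary C Xm n x0 x1)"
  unfolding compatible_family_def
proof (intro conjI ballI impI)
  fix \<sigma> assume "\<sigma> \<in> boundary (Suc n)"
  then show "glued_boundary C Xm n x0 x1 \<sigma> \<in> hom C W (X (sdim \<sigma>))"
    using glued_boundary_hom x by blast
next
  fix \<sigma> \<tau> assume \<sigma>: "\<sigma> \<in> boundary (Suc n)" and \<tau>: "\<tau> \<in> boundary (Suc n)" and "\<tau> \<subseteq> \<sigma>"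
  let ?face = "Xm (sdim \<tau>) (sdim \<sigma>) (incl \<tau> \<sigma>)"
  have s0: "last_degen Xm n \<cdot> x0 \<in> hom C W (X (Suc n))"
    by (rule hom_comp[OF x(1) last_degen_hom[OF X]])
  have degenerate: "?face \<cdot> (leg Xm (Suc n) \<sigma> \<cdot> (last_degen Xm n \<cdot> x0))
      = leg Xm (Suc n) \<tau> \<cdot> (last_degen Xm n \<cdot> x0)"
    using compatible_family_legs[OF boundary_subset_simplices s0] \<sigma> \<tau> \<open>\<tau> \<subseteq> \<sigma>\<close>
    unfolding compatible_family_def by blast
  show "?face \<cdot> glued_boundary C Xm n x0 x1 \<sigma> = glued_boundary C Xm n x0 x1 \<tau>"
  proof (cases "Suc n \<in> \<sigma>")
    case True
    show ?thesis
    proof (cases "Suc n \<in> \<tau>")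
      case False
      then have "\<tau> \<in> simplices n" "\<tau> \<in> boundary n"
        using \<tau> True \<sigma> \<open>\<tau> \<subseteq> \<sigma>\<close> boundary_Suc_not_last boundary_Suc_overlap by auto
      then show ?thesis
        using True False degenerate eq x leg_last_degen_comp[OF X] unfolding glued_boundary_def by simp
    qed (use True degenerate in \<open>simp add: glued_boundary_def\<close>)
  next
    case False
    then have "Suc n \<notin> \<tau>" "\<sigma> \<in> simplices n" "\<tau> \<in> simplices n"
      using \<sigma> \<tau> \<open>\<tau> \<subseteq> \<sigma>\<close> boundary_Suc_not_last by auto
    then show ?thesis
      using False compatible_family_legs[OF subset_refl x(2)] \<open>\<tau> \<subseteq> \<sigma>\<close>
      unfolding glued_boundary_def compatible_family_def by simp
  qed
qed

lemma glued_boundary_comp: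
  assumes "\<sigma> \<in> boundary (Suc n)" "x0 \<in> hom C W (X n)" "x1 \<in> hom C W (X n)" "r \<in> hom C W' W"
  shows "glued_boundary C Xm n x0 x1 \<sigma> \<cdot> r = glued_boundary C Xm n (x0 \<cdot> r) (x1 \<cdot> r) \<sigma>"
proof (cases "Suc n \<in> \<sigma>")
  case True
  have "leg Xm (Suc n) \<sigma> \<in> hom C (X (Suc n)) (X (sdim \<sigma>))"
    using assms(1) boundary_subset_simplices by (intro leg_hom[OF X]) blast
  then show ?thesis
    using True comp_assoc[OF assms(4) assms(2) last_degen_hom[OF X]]
      comp_assoc[OF assms(4) hom_comp[OF assms(2) last_degen_hom[OF X]]]
    unfolding glued_boundary_def by simp
next
  case False
  then show ?thesis
    using comp_assoc[OF assms(4) assms(3) leg_hom[OF X boundary_Suc_not_last[OF assms(1) False]]]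
    unfolding glued_boundary_def by simp
qed

lemma glued_boundary_diag:
  assumes "\<sigma> \<in> boundary (Suc n)" "x \<in> hom C W (X n)"
  shows "glued_boundary C Xm n x x \<sigma> = leg Xm (Suc n) \<sigma> \<cdot> (last_degen Xm n \<cdot> x)"
  using assms boundary_Suc_not_last leg_last_degen_comp[OF X] unfolding glued_boundary_def by simp

lemma glued_boundary_horn:
  assumes "\<sigma> \<in> horn (Suc n) (Suc n)" "x0 \<in> hom C W (X n)"
    and "\<And>\<sigma>. \<sigma> \<in> boundary n \<Longrightarrow> leg Xm n \<sigma> \<cdot> x0 = leg Xm n \<sigma> \<cdot> x1"
  shows "glued_boundary C Xm n x0 x1 \<sigma> = leg Xm (Suc n) \<sigma> \<cdot> (last_degen Xm n \<cdot> x0)"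
proof (cases "Suc n \<in> \<sigma>")
  case False
  have "\<sigma> \<in> boundary n"
    by (rule horn_not_last[OF assms(1) False])
  moreover from this have "\<sigma> \<in> simplices n"
    using boundary_subset_simplices by blast
  ultimately show ?thesis
    using False assms(3) leg_last_degen_comp[OF X _ assms(2)] unfolding glued_boundary_def by simp
qed (simp add: glued_boundary_def)

lemma glued_boundary_last:
  "x1 \<in> hom C W (X n) \<Longrightarrow> glued_boundary C Xm n x0 x1 {0..n} = x1"
  unfolding glued_boundary_def by (simp add: leg_top[OF X] comp_id_left)

end

context
  fixes X :: "nat \<Rightarrow> 'o" and Xm Y Ym f
  assumes X: "is_simplicial C X Xm" and Y: "is_simplicial C Y Ym" and f: "is_smap C X Xm Y Ym f"
begin

lemma smap_hom: "f n \<in> hom C (X n) (Y n)"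
  using f unfolding is_smap_def by blast

lemma smap_natural: "mono_map n m \<alpha> \<Longrightarrow> f n \<cdot> Xm n m \<alpha> = Ym n m \<alpha> \<cdot> f m"
  using f unfolding is_smap_def by blast

lemma leg_natural: "\<sigma> \<in> simplices m \<Longrightarrow> f (sdim \<sigma>) \<cdot> leg Xm m \<sigma> = leg Ym m \<sigma> \<cdot> f m"
  unfolding leg_def by (intro smap_natural mono_map_leg)

lemma leg_natural_comp:
  "\<sigma> \<in> simplices m \<Longrightarrow> x \<in> hom C W (X m) \<Longrightarrow>
    f (sdim \<sigma>) \<cdot> (leg Xm m \<sigma> \<cdot> x) = leg Ym m \<sigma> \<cdot> (f m \<cdot> x)"
  using comp_assoc[OF _ leg_hom[OF X] smap_hom] comp_assoc[OF _ smap_hom leg_hom[OF Y]] leg_natural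
  by metis

lemma last_degen_natural: "f (Suc n) \<cdot> last_degen Xm n = last_degen Ym n \<cdot> f n"
  unfolding last_degen_def by (rule smap_natural) (auto simp: mono_map_def)

lemma last_face_natural: "f n \<cdot> last_face Xm n = last_face Ym n \<cdot> f (Suc n)"
  unfolding last_face_def by (rule smap_natural) (auto simp: mono_map_def)

lemma compatible_family_map:
  assumes S: "S \<subseteq> simplices m" and F: "compatible_family C X Xm S W F"
  shows "compatible_family C Y Ym S W (\<lambda>\<sigma>. f (sdim \<sigma>) \<cdot> F \<sigma>)"
  unfolding compatible_family_def
proof (intro conjI ballI impI)
  fix \<sigma> assume "\<sigma> \<in> S"
  then have "F \<sigma> \<in> hom C W (X (sdim \<sigma>))"
    using F unfolding compatible_family_def by blast
  then show "f (sdim \<sigma>) \<cdot> F \<sigma> \<in> hom C W (Y (sdim \<sigma>))"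
    by (rule hom_comp[OF _ smap_hom])
next
  fix \<sigma> \<tau> assume "\<sigma> \<in> S" "\<tau> \<in> S" "\<tau> \<subseteq> \<sigma>"
  then have F\<sigma>: "F \<sigma> \<in> hom C W (X (sdim \<sigma>))" "Xm (sdim \<tau>) (sdim \<sigma>) (incl \<tau> \<sigma>) \<cdot> F \<sigma> = F \<tau>"
    and face: "mono_map (sdim \<tau>) (sdim \<sigma>) (incl \<tau> \<sigma>)"
    using F S mono_map_face[of \<sigma> m \<tau>] unfolding compatible_family_def by auto
  have "Ym (sdim \<tau>) (sdim \<sigma>) (incl \<tau> \<sigma>) \<cdot> (f (sdim \<sigma>) \<cdot> F \<sigma>)
      = (Ym (sdim \<tau>) (sdim \<sigma>) (incl \<tau> \<sigma>) \<cdot> f (sdim \<sigma>)) \<cdot> F \<sigma>"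
    using comp_assoc[OF F\<sigma>(1) smap_hom simplicial_hom[OF Y face]] by simp
  also have "\<dots> = f (sdim \<tau>) \<cdot> (Xm (sdim \<tau>) (sdim \<sigma>) (incl \<tau> \<sigma>) \<cdot> F \<sigma>)"
    using comp_assoc[OF F\<sigma>(1) simplicial_hom[OF X face] smap_hom] smap_natural[OF face] by simp
  finally show "Ym (sdim \<tau>) (sdim \<sigma>) (incl \<tau> \<sigma>) \<cdot> (f (sdim \<sigma>) \<cdot> F \<sigma>) = f (sdim \<tau>) \<cdot> F \<tau>"
    using F\<sigma>(2) by simp
qed

lemma glued_boundary_map:
  assumes "\<sigma> \<in> boundary (Suc n)" "x0 \<in> hom C W (X n)" "x1 \<in> hom C W (X n)"
  shows "f (sdim \<sigma>) \<cdot> glued_boundary C Xm n x0 x1 \<sigma> = glued_boundary C Ym n (f n \<cdot> x0) (f n \<cdot> x1) \<sigma>"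
proof (cases "Suc n \<in> \<sigma>")
  case True
  have s: "last_degen Xm n \<cdot> x0 \<in> hom C W (X (Suc n))"
    by (rule hom_comp[OF assms(2) last_degen_hom[OF X]])
  have "f (Suc n) \<cdot> (last_degen Xm n \<cdot> x0) = last_degen Ym n \<cdot> (f n \<cdot> x0)"
    using comp_assoc[OF assms(2) last_degen_hom[OF X] smap_hom]
      comp_assoc[OF assms(2) smap_hom last_degen_hom[OF Y]] last_degen_natural by simp
  then show ?thesis
    using True assms(1) boundary_subset_simplices leg_natural_comp[OF _ s]
    unfolding glued_boundary_def by auto
next
  case False
  then show ?thesis
    using leg_natural_comp[OF boundary_Suc_not_last[OF assms(1) False] assms(3)]
    unfolding glued_boundary_def by simp
qed

end

lemma smap_comp:
  assumes X: "is_simplicial C X Xm" and Y: "is_simplicial C Y Ym" and Z: "is_simplicial C Z Zm"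
    and f: "is_smap C X Xm Y Ym f" and g: "is_smap C Y Ym Z Zm g"
  shows "is_smap C X Xm Z Zm (\<lambda>n. g n \<cdot> f n)"
  unfolding is_smap_def
proof (intro conjI allI impI)
  fix n show "g n \<cdot> f n \<in> hom C (X n) (Z n)"
    by (rule hom_comp[OF smap_hom[OF X Y f] smap_hom[OF Y Z g]])
next
  fix n m \<alpha> assume \<alpha>: "mono_map n m \<alpha>"
  note homs = smap_hom[OF X Y f] smap_hom[OF Y Z g] simplicial_hom[OF X \<alpha>] simplicial_hom[OF Z \<alpha>]
    simplicial_hom[OF Y \<alpha>]
  have "(g n \<cdot> f n) \<cdot> Xm n m \<alpha> = g n \<cdot> (Ym n m \<alpha> \<cdot> f m)"
    using comp_assoc[OF homs(3) homs(1) homs(2)] smap_natural[OF X Y f \<alpha>] by simp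
  also have "\<dots> = Zm n m \<alpha> \<cdot> (g m \<cdot> f m)"
    using comp_assoc[OF homs(1) homs(5) homs(2)] comp_assoc[OF homs(1) homs(2) homs(4)]
      smap_natural[OF Y Z g \<alpha>] by simp
  finally show "(g n \<cdot> f n) \<cdot> Xm n m \<alpha> = Zm n m \<alpha> \<cdot> (g m \<cdot> f m)" .
qed

lemma is_cone_iff_compatible_family:
  "is_cone C T (\<lambda>\<sigma>. X (sdim \<sigma>)) (sedges Xm T) W q \<longleftrightarrow> W \<in> Ob C \<and> compatible_family C X Xm T W q"
proof -
  have edges: "(\<forall>(\<sigma>, \<tau>, m)\<in>sedges Xm T. m \<cdot> q \<sigma> = q \<tau>) \<longleftrightarrow>
      (\<forall>\<sigma>\<in>T. \<forall>\<tau>\<in>T. \<tau> \<subseteq> \<sigma> \<longrightarrow> Xm (sdim \<tau>) (sdim \<sigma>) (incl \<tau> \<sigma>) \<cdot> q \<sigma> = q \<tau>)"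
    unfolding sedges_def by auto
  show ?thesis
    unfolding is_cone_def compatible_family_def edges by simp
qed

lemma Map_compatible_family: "is_Map C X Xm T L p \<Longrightarrow> L \<in> Ob C \<and> compatible_family C X Xm T L p"
  unfolding is_Map_def is_limit_def is_cone_iff_compatible_family by blast

lemma Map_lift:
  assumes "is_Map C X Xm T L p" "W \<in> Ob C" "compatible_family C X Xm T W F"
  obtains u where "u \<in> hom C W L" "\<And>\<sigma>. \<sigma> \<in> T \<Longrightarrow> p \<sigma> \<cdot> u = F \<sigma>"
  using assms unfolding is_Map_def is_limit_def is_cone_iff_compatible_family by blast

lemma Map_eqI:
  assumes X: "is_simplicial C X Xm" and T: "T \<subseteq> simplices m" and M: "is_Map C X Xm T L p"
    and u: "u \<in> hom C W L" "u' \<in> hom C W L" and eq: "\<And>\<sigma>. \<sigma> \<in> T \<Longrightarrow> p \<sigma> \<cdot> u = p \<sigma> \<cdot> u'"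
  shows "u = u'"
proof -
  have "compatible_family C X Xm T W (\<lambda>\<sigma>. p \<sigma> \<cdot> u)"
    using compatible_family_comp[OF X T _ u(1)] Map_compatible_family[OF M] by blast
  then have "is_cone C T (\<lambda>\<sigma>. X (sdim \<sigma>)) (sedges Xm T) W (\<lambda>\<sigma>. p \<sigma> \<cdot> u)"
    using hom_objects[OF u(1)] is_cone_iff_compatible_family by blast
  then have "\<exists>!v. v \<in> hom C W L \<and> (\<forall>\<sigma>\<in>T. p \<sigma> \<cdot> v = p \<sigma> \<cdot> u)"
    using M unfolding is_Map_def is_limit_def by blast
  then show ?thesis
    using u eq by metis
qed

end

lemma (in descent_cat) Map_exists:
  assumes X: "is_simplicial C X Xm" and T: "T \<subseteq> simplices m"
  shows "\<exists>L p. is_Map C X Xm T L p"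
proof -
  have "finite T"
    using T finite_simplices finite_subset by blast
  moreover have "sedges Xm T \<subseteq> (\<lambda>(\<sigma>, \<tau>). (\<sigma>, \<tau>, Xm (sdim \<tau>) (sdim \<sigma>) (incl \<tau> \<sigma>))) ` (T \<times> T)"
    unfolding sedges_def by auto
  ultimately have "finite (sedges Xm T)"
    using finite_subset by blast
  moreover have "is_diagram C T (\<lambda>\<sigma>. X (sdim \<sigma>)) (sedges Xm T)"
    unfolding is_diagram_def
  proof (intro conjI ballI)
    fix \<sigma> show "X (sdim \<sigma>) \<in> Ob C"
      using X unfolding is_simplicial_def by blast
  next
    fix e assume "e \<in> sedges Xm T"
    then obtain \<sigma> \<tau> where "e = (\<sigma>, \<tau>, Xm (sdim \<tau>) (sdim \<sigma>) (incl \<tau> \<sigma>))" "\<sigma> \<in> T" "\<tau> \<in> T" "\<tau> \<subseteq> \<sigma>"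
      unfolding sedges_def by blast
    then show "case e of (i, j, m) \<Rightarrow> i \<in> T \<and> j \<in> T \<and> m \<in> hom C (X (sdim i)) (X (sdim j))"
      using T face_hom[OF X, of \<sigma> m \<tau>] by auto
  qed
  ultimately show ?thesis
    using finite_limit_exists[OF \<open>finite T\<close>] unfolding is_Map_def by blast
qed

section \<open>Relative matching objects\<close>

text \<open>\<open>R\<close> is the relative matching object \<open>M(S, f) = Map(S, X) \<times>\<^bsub>Map(S, Y)\<^esub> Y\<^sub>m\<close> of \<open>S \<subseteq> \<Delta>\<^sup>m\<close>:
  a map into \<open>R\<close> is a compatible \<open>S\<close>-family in \<open>X\<close> together with an \<open>m\<close>-simplex of \<open>Y\<close>
  whose faces over \<open>S\<close> are its image under \<open>f\<close>.\<close>

definition is_rel_matching :: "('o,'m) cat \<Rightarrow> (nat \<Rightarrow> 'o) \<Rightarrow> (nat \<Rightarrow> nat \<Rightarrow> (nat \<Rightarrow> nat) \<Rightarrow> 'm)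
    \<Rightarrow> (nat \<Rightarrow> 'o) \<Rightarrow> (nat \<Rightarrow> nat \<Rightarrow> (nat \<Rightarrow> nat) \<Rightarrow> 'm) \<Rightarrow> (nat \<Rightarrow> 'm) \<Rightarrow> nat set set \<Rightarrow> nat
    \<Rightarrow> 'o \<Rightarrow> (nat set \<Rightarrow> 'm) \<Rightarrow> 'm \<Rightarrow> bool" where
  "is_rel_matching C X Xm Y Ym f S m R pX pY \<longleftrightarrow>
     compatible_family C X Xm S R pX \<and> pY \<in> hom C R (Y m) \<and>
     (\<forall>\<sigma>\<in>S. Cmp C (f (sdim \<sigma>)) (pX \<sigma>) = Cmp C (leg Ym m \<sigma>) pY) \<and>
     (\<forall>W xs y. compatible_family C X Xm S W xs \<and> y \<in> hom C W (Y m) \<and>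
        (\<forall>\<sigma>\<in>S. Cmp C (f (sdim \<sigma>)) (xs \<sigma>) = Cmp C (leg Ym m \<sigma>) y) \<longrightarrow>
        (\<exists>r. r \<in> hom C W R \<and> (\<forall>\<sigma>\<in>S. Cmp C (pX \<sigma>) r = xs \<sigma>) \<and> Cmp C pY r = y)) \<and>
     (\<forall>W r r'. r \<in> hom C W R \<and> r' \<in> hom C W R \<and> (\<forall>\<sigma>\<in>S. Cmp C (pX \<sigma>) r = Cmp C (pX \<sigma>) r') \<and>
        Cmp C pY r = Cmp C pY r' \<longrightarrow> r = r')"

definition rel_matching_map :: "('o,'m) cat \<Rightarrow> (nat \<Rightarrow> 'o) \<Rightarrow> (nat \<Rightarrow> nat \<Rightarrow> (nat \<Rightarrow> nat) \<Rightarrow> 'm)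
    \<Rightarrow> (nat \<Rightarrow> 'o) \<Rightarrow> (nat \<Rightarrow> nat \<Rightarrow> (nat \<Rightarrow> nat) \<Rightarrow> 'm) \<Rightarrow> (nat \<Rightarrow> 'm) \<Rightarrow> nat set set \<Rightarrow> nat
    \<Rightarrow> 'o \<Rightarrow> (nat set \<Rightarrow> 'm) \<Rightarrow> 'm \<Rightarrow> 'm \<Rightarrow> bool" where
  "rel_matching_map C X Xm Y Ym f S m R pX pY r \<longleftrightarrow>
     is_rel_matching C X Xm Y Ym f S m R pX pY \<and> r \<in> hom C (X m) R \<and>
     (\<forall>\<sigma>\<in>S. Cmp C (pX \<sigma>) r = leg Xm m \<sigma>) \<and> Cmp C pY r = f m"

definition rel_matching_tuple :: "('o,'m) cat \<Rightarrow> nat set set \<Rightarrow> 'o \<Rightarrow> (nat set \<Rightarrow> 'm) \<Rightarrow> 'm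
    \<Rightarrow> 'o \<Rightarrow> (nat set \<Rightarrow> 'm) \<Rightarrow> 'm \<Rightarrow> 'm" where
  "rel_matching_tuple C S R pX pY W xs y =
     (SOME r. r \<in> hom C W R \<and> (\<forall>\<sigma>\<in>S. Cmp C (pX \<sigma>) r = xs \<sigma>) \<and> Cmp C pY r = y)"

context category
begin

lemma rel_matching_proj_hom:
  assumes "is_rel_matching C X Xm Y Ym f S m R pX pY"
  shows "\<And>\<sigma>. \<sigma> \<in> S \<Longrightarrow> pX \<sigma> \<in> hom C R (X (sdim \<sigma>))" and "pY \<in> hom C R (Y m)"
  using assms unfolding is_rel_matching_def compatible_family_def by blast+

lemma rel_matching_tuple:
  assumes R: "is_rel_matching C X Xm Y Ym f S m R pX pY"
    and xs: "compatible_family C X Xm S W xs" and y: "y \<in> hom C W (Y m)"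
    and eq: "\<And>\<sigma>. \<sigma> \<in> S \<Longrightarrow> f (sdim \<sigma>) \<cdot> xs \<sigma> = leg Ym m \<sigma> \<cdot> y"
  shows "rel_matching_tuple C S R pX pY W xs y \<in> hom C W R"
    and "\<And>\<sigma>. \<sigma> \<in> S \<Longrightarrow> pX \<sigma> \<cdot> rel_matching_tuple C S R pX pY W xs y = xs \<sigma>"
    and "pY \<cdot> rel_matching_tuple C S R pX pY W xs y = y"
proof -
  have "\<exists>r. r \<in> hom C W R \<and> (\<forall>\<sigma>\<in>S. pX \<sigma> \<cdot> r = xs \<sigma>) \<and> pY \<cdot> r = y"
    using R xs y eq unfolding is_rel_matching_def by blast
  from someI_ex[OF this] show "rel_matching_tuple C S R pX pY W xs y \<in> hom C W R"
    and "\<And>\<sigma>. \<sigma> \<in> S \<Longrightarrow> pX \<sigma> \<cdot> rel_matching_tuple C S R pX pY W xs y = xs \<sigma>"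
    and "pY \<cdot> rel_matching_tuple C S R pX pY W xs y = y"
    unfolding rel_matching_tuple_def by blast+
qed

lemma rel_matching_eqI:
  assumes "is_rel_matching C X Xm Y Ym f S m R pX pY" "r \<in> hom C W R" "r' \<in> hom C W R"
    "\<And>\<sigma>. \<sigma> \<in> S \<Longrightarrow> pX \<sigma> \<cdot> r = pX \<sigma> \<cdot> r'" "pY \<cdot> r = pY \<cdot> r'"
  shows "r = r'"
  using assms unfolding is_rel_matching_def by blast

lemma rel_matching_map_homs:
  assumes "rel_matching_map C X Xm Y Ym f S m R pX pY r"
  shows "r \<in> hom C (X m) R" "\<And>\<sigma>. \<sigma> \<in> S \<Longrightarrow> pX \<sigma> \<in> hom C R (X (sdim \<sigma>))" "pY \<in> hom C R (Y m)"
  using assms rel_matching_proj_hom[of X Xm Y Ym f S m R pX pY] unfolding rel_matching_map_def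
  by blast+

lemma rel_matching_map_legs:
  assumes "rel_matching_map C X Xm Y Ym f S m R pX pY r"
  shows "\<And>\<sigma>. \<sigma> \<in> S \<Longrightarrow> pX \<sigma> \<cdot> r = leg Xm m \<sigma>" "pY \<cdot> r = f m"
    and "is_rel_matching C X Xm Y Ym f S m R pX pY"
  using assms unfolding rel_matching_map_def by blast+

lemma rel_matching_map_square:
  assumes "rel_matching_map C X Xm Y Ym f S m R pX pY r" "\<sigma> \<in> S"
  shows "f (sdim \<sigma>) \<cdot> pX \<sigma> = leg Ym m \<sigma> \<cdot> pY"
  using assms unfolding rel_matching_map_def is_rel_matching_def by blast

lemma rel_matching_map_comp_eq_iff:
  assumes r: "rel_matching_map C X Xm Y Ym f S m R pX pY r"
    and x: "x \<in> hom C V (X m)" and t: "t \<in> hom C V R"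
  shows "r \<cdot> x = t \<longleftrightarrow> (\<forall>\<sigma>\<in>S. leg Xm m \<sigma> \<cdot> x = pX \<sigma> \<cdot> t) \<and> f m \<cdot> x = pY \<cdot> t"
proof -
  have R: "is_rel_matching C X Xm Y Ym f S m R pX pY" and rh: "r \<in> hom C (X m) R"
    and legs: "\<And>\<sigma>. \<sigma> \<in> S \<Longrightarrow> pX \<sigma> \<cdot> r = leg Xm m \<sigma>" and top: "pY \<cdot> r = f m"
    using r unfolding rel_matching_map_def by auto
  have "pX \<sigma> \<cdot> (r \<cdot> x) = leg Xm m \<sigma> \<cdot> x" if "\<sigma> \<in> S" for \<sigma>
    using comp_assoc[OF x rh rel_matching_proj_hom(1)[OF R that]] legs[OF that] by simp
  moreover have "pY \<cdot> (r \<cdot> x) = f m \<cdot> x"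
    using comp_assoc[OF x rh rel_matching_proj_hom(2)[OF R]] top by simp
  ultimately show ?thesis
    using rel_matching_eqI[OF R hom_comp[OF x rh] t] by auto
qed

lemma rel_matching_map_eq_iff:
  assumes r: "rel_matching_map C X Xm Y Ym f S m R pX pY r"
    and x: "x \<in> hom C V (X m)" and x': "x' \<in> hom C V (X m)"
  shows "r \<cdot> x = r \<cdot> x' \<longleftrightarrow> (\<forall>\<sigma>\<in>S. leg Xm m \<sigma> \<cdot> x = leg Xm m \<sigma> \<cdot> x') \<and> f m \<cdot> x = f m \<cdot> x'"
proof -
  have "pX \<sigma> \<cdot> (r \<cdot> x') = leg Xm m \<sigma> \<cdot> x'" if "\<sigma> \<in> S" for \<sigma>
    using comp_assoc[OF x' rel_matching_map_homs(1)[OF r] rel_matching_map_homs(2)[OF r that]]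
      rel_matching_map_legs(1)[OF r that] by simp
  moreover have "pY \<cdot> (r \<cdot> x') = f m \<cdot> x'"
    using comp_assoc[OF x' rel_matching_map_homs(1)[OF r] rel_matching_map_homs(3)[OF r]]
      rel_matching_map_legs(2)[OF r] by simp
  ultimately show ?thesis
    using rel_matching_map_comp_eq_iff[OF r x hom_comp[OF x' rel_matching_map_homs(1)[OF r]]] by simp
qed

lemma rel_matching_map_pullback_legs:
  assumes r: "rel_matching_map C X Xm Y Ym f S m R pX pY r"
    and pb: "is_pullback C r b M mx mb" and b: "b \<in> hom C W R"
  shows "\<And>\<sigma>. \<sigma> \<in> S \<Longrightarrow> leg Xm m \<sigma> \<cdot> mx = pX \<sigma> \<cdot> (b \<cdot> mb)" and "f m \<cdot> mx = pY \<cdot> (b \<cdot> mb)"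
proof -
  have "r \<in> hom C (X m) R"
    using r unfolding rel_matching_map_def by blast
  then have "mx \<in> hom C M (X m)" "mb \<in> hom C M W" "r \<cdot> mx = b \<cdot> mb"
    using pullback_hom[OF pb] b unfolding hom_def by auto
  then show "\<And>\<sigma>. \<sigma> \<in> S \<Longrightarrow> leg Xm m \<sigma> \<cdot> mx = pX \<sigma> \<cdot> (b \<cdot> mb)" and "f m \<cdot> mx = pY \<cdot> (b \<cdot> mb)"
    using rel_matching_map_comp_eq_iff[OF r, of mx M "b \<cdot> mb"] hom_comp[OF _ b] by auto
qed

lemma rel_matching_map_pullback_lift:
  assumes r: "rel_matching_map C X Xm Y Ym f S m R pX pY r"
    and pb: "is_pullback C r b M mx mb" and b: "b \<in> hom C W R"
    and x: "x \<in> hom C V (X m)" and w: "w \<in> hom C V W"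
    and legs: "\<And>\<sigma>. \<sigma> \<in> S \<Longrightarrow> leg Xm m \<sigma> \<cdot> x = pX \<sigma> \<cdot> (b \<cdot> w)" and top: "f m \<cdot> x = pY \<cdot> (b \<cdot> w)"
  obtains t where "t \<in> hom C V M" "mx \<cdot> t = x" "mb \<cdot> t = w"
proof -
  have "r \<in> hom C (X m) R"
    using r unfolding rel_matching_map_def by blast
  then have "Dom C r = X m" "Dom C b = W"
    using b unfolding hom_def by auto
  moreover have "r \<cdot> x = b \<cdot> w"
    using rel_matching_map_comp_eq_iff[OF r x hom_comp[OF w b]] legs top by blast
  ultimately show ?thesis
    using pullback_lift[OF pb] x w that by metis
qed

text \<open>The relative matching object as it appears in \<open>rel_map_prop\<close>, built from limits
  \<open>Map(S, X)\<close>, \<open>Map(S, Y)\<close>, \<open>Map(\<Delta>\<^sup>m, Y)\<close> and a pullback.\<close>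

context

  fixes X :: "nat \<Rightarrow> 'o" and Xm Y Ym f S m LSX pSX LSY pSY LTY pTY a b P q1 q2
  assumes X: "is_simplicial C X Xm" and Y: "is_simplicial C Y Ym" and f: "is_smap C X Xm Y Ym f"
    and S: "S \<subseteq> simplices m"
    and MSX: "is_Map C X Xm S LSX pSX" and MSY: "is_Map C Y Ym S LSY pSY"
    and MTY: "is_Map C Y Ym (simplices m) LTY pTY"
    and a: "a \<in> hom C LSX LSY" and a_legs: "\<And>\<sigma>. \<sigma> \<in> S \<Longrightarrow> pSY \<sigma> \<cdot> a = f (sdim \<sigma>) \<cdot> pSX \<sigma>"
    and b: "b \<in> hom C LTY LSY" and b_legs: "\<And>\<sigma>. \<sigma> \<in> S \<Longrightarrow> pSY \<sigma> \<cdot> b = pTY \<sigma>"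
    and pb: "is_pullback C a b P q1 q2"
begin

lemma pullback_data_homs:
  shows "q1 \<in> hom C P LSX" "q2 \<in> hom C P LTY" "a \<cdot> q1 = b \<cdot> q2"
    and "\<And>\<sigma>. \<sigma> \<in> S \<Longrightarrow> pSX \<sigma> \<in> hom C LSX (X (sdim \<sigma>))"
    and "\<And>\<sigma>. \<sigma> \<in> S \<Longrightarrow> pSY \<sigma> \<in> hom C LSY (Y (sdim \<sigma>))"
    and "\<And>\<sigma>. \<sigma> \<in> simplices m \<Longrightarrow> pTY \<sigma> \<in> hom C LTY (Y (sdim \<sigma>))"
    and "pTY {0..m} \<in> hom C LTY (Y m)"
  using pullback_hom[OF pb] a b Map_compatible_family[OF MSX] Map_compatible_family[OF MSY]
    Map_compatible_family[OF MTY] top_simplex[of m]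
  unfolding compatible_family_def hom_def by auto

lemma pullback_data_top:
  "\<sigma> \<in> simplices m \<Longrightarrow> pTY \<sigma> = leg Ym m \<sigma> \<cdot> pTY {0..m}"
  using compatible_family_simplices[OF Y] Map_compatible_family[OF MTY] by blast

lemma pullback_data_square:
  assumes "\<sigma> \<in> S"
  shows "f (sdim \<sigma>) \<cdot> (pSX \<sigma> \<cdot> q1) = leg Ym m \<sigma> \<cdot> (pTY {0..m} \<cdot> q2)"
proof -
  note homs = pullback_data_homs smap_hom[OF X Y f] leg_hom[OF Y subsetD[OF S assms]]
  have "f (sdim \<sigma>) \<cdot> (pSX \<sigma> \<cdot> q1) = (pSY \<sigma> \<cdot> a) \<cdot> q1"
    using homs assms a_legs by (simp add: comp_simps)
  also have "\<dots> = (pSY \<sigma> \<cdot> b) \<cdot> q2"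
    using homs assms a b by (simp add: comp_simps)
  also have "\<dots> = leg Ym m \<sigma> \<cdot> (pTY {0..m} \<cdot> q2)"
    using homs assms b_legs pullback_data_top S by (simp add: comp_simps subsetD)
  finally show ?thesis .
qed

lemma pullback_data_lift:
  assumes xs: "compatible_family C X Xm S W xs" and y: "y \<in> hom C W (Y m)"
    and eq: "\<And>\<sigma>. \<sigma> \<in> S \<Longrightarrow> f (sdim \<sigma>) \<cdot> xs \<sigma> = leg Ym m \<sigma> \<cdot> y"
  obtains r where "r \<in> hom C W P" "\<And>\<sigma>. \<sigma> \<in> S \<Longrightarrow> (pSX \<sigma> \<cdot> q1) \<cdot> r = xs \<sigma>"
    "(pTY {0..m} \<cdot> q2) \<cdot> r = y"
proof -
  note homs = pullback_data_homs smap_hom[OF X Y f]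
  have W: "W \<in> Ob C"
    using hom_objects[OF y] by blast
  obtain ux where ux: "ux \<in> hom C W LSX" "\<And>\<sigma>. \<sigma> \<in> S \<Longrightarrow> pSX \<sigma> \<cdot> ux = xs \<sigma>"
    using Map_lift[OF MSX W xs] by blast
  obtain uy where uy: "uy \<in> hom C W LTY" "\<And>\<sigma>. \<sigma> \<in> simplices m \<Longrightarrow> pTY \<sigma> \<cdot> uy = leg Ym m \<sigma> \<cdot> y"
    using Map_lift[OF MTY W compatible_family_legs[OF Y subset_refl y]] by blast
  have "a \<cdot> ux = b \<cdot> uy"
  proof (rule Map_eqI[OF Y S MSY hom_comp[OF ux(1) a] hom_comp[OF uy(1) b]])
    fix \<sigma> assume \<sigma>: "\<sigma> \<in> S"
    have "pSY \<sigma> \<cdot> (a \<cdot> ux) = (pSY \<sigma> \<cdot> a) \<cdot> ux"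
      using homs ux \<sigma> a by (simp add: comp_simps)
    also have "\<dots> = f (sdim \<sigma>) \<cdot> xs \<sigma>"
      using homs ux \<sigma> a_legs by (simp add: comp_simps flip: ux(2))
    also have "\<dots> = (pSY \<sigma> \<cdot> b) \<cdot> uy"
      using \<sigma> b_legs eq S uy(2) by (simp add: subsetD)
    also have "\<dots> = pSY \<sigma> \<cdot> (b \<cdot> uy)"
      using homs uy \<sigma> b by (simp add: comp_simps)
    finally show "pSY \<sigma> \<cdot> (a \<cdot> ux) = pSY \<sigma> \<cdot> (b \<cdot> uy)" .
  qed
  moreover have "Dom C a = LSX" "Dom C b = LTY"
    using a b unfolding hom_def by auto
  ultimately obtain r where r: "r \<in> hom C W P" "q1 \<cdot> r = ux" "q2 \<cdot> r = uy"
    using pullback_lift[OF pb] ux(1) uy(1) by metis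
  show ?thesis
  proof
    show "(pSX \<sigma> \<cdot> q1) \<cdot> r = xs \<sigma>" if "\<sigma> \<in> S" for \<sigma>
      using homs r ux that by (simp add: comp_simps)
    show "(pTY {0..m} \<cdot> q2) \<cdot> r = y"
      using homs r uy(2)[OF top_simplex] y by (simp add: comp_simps leg_top[OF Y] comp_id_left)
  qed (rule r(1))
qed

lemma pullback_data_eqI:
  assumes r: "r \<in> hom C W P" "r' \<in> hom C W P"
    and eqX: "\<And>\<sigma>. \<sigma> \<in> S \<Longrightarrow> (pSX \<sigma> \<cdot> q1) \<cdot> r = (pSX \<sigma> \<cdot> q1) \<cdot> r'"
    and eqY: "(pTY {0..m} \<cdot> q2) \<cdot> r = (pTY {0..m} \<cdot> q2) \<cdot> r'"
  shows "r = r'"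
proof (rule pullback_eqI[OF pb r])
  note homs = pullback_data_homs
  show "q1 \<cdot> r = q1 \<cdot> r'"
    by (rule Map_eqI[OF X S MSX hom_comp[OF r(1) homs(1)] hom_comp[OF r(2) homs(1)]])
      (use homs r eqX in \<open>simp add: comp_simps\<close>)
  show "q2 \<cdot> r = q2 \<cdot> r'"
  proof (rule Map_eqI[OF Y subset_refl MTY hom_comp[OF r(1) homs(2)] hom_comp[OF r(2) homs(2)]])
    fix \<sigma> assume "\<sigma> \<in> simplices m"
    then show "pTY \<sigma> \<cdot> (q2 \<cdot> r) = pTY \<sigma> \<cdot> (q2 \<cdot> r')"
      using homs r eqY pullback_data_top leg_hom[OF Y] by (simp add: comp_simps)
  qed
qed

lemma is_rel_matching_pullback_data:
  "is_rel_matching C X Xm Y Ym f S m P (\<lambda>\<sigma>. pSX \<sigma> \<cdot> q1) (pTY {0..m} \<cdot> q2)"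
  unfolding is_rel_matching_def
proof (intro conjI allI impI ballI)
  note homs = pullback_data_homs
  show "compatible_family C X Xm S P (\<lambda>\<sigma>. pSX \<sigma> \<cdot> q1)"
    using compatible_family_comp[OF X S _ homs(1)] Map_compatible_family[OF MSX] by blast
  show "pTY {0..m} \<cdot> q2 \<in> hom C P (Y m)"
    by (rule hom_comp[OF homs(2) homs(7)])
  show "f (sdim \<sigma>) \<cdot> (pSX \<sigma> \<cdot> q1) = leg Ym m \<sigma> \<cdot> (pTY {0..m} \<cdot> q2)" if "\<sigma> \<in> S" for \<sigma>
    using that by (rule pullback_data_square)
  show "\<exists>r. r \<in> hom C W P \<and> (\<forall>\<sigma>\<in>S. (pSX \<sigma> \<cdot> q1) \<cdot> r = xs \<sigma>) \<and> (pTY {0..m} \<cdot> q2) \<cdot> r = y"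
    if "compatible_family C X Xm S W xs \<and> y \<in> hom C W (Y m) \<and>
      (\<forall>\<sigma>\<in>S. f (sdim \<sigma>) \<cdot> xs \<sigma> = leg Ym m \<sigma> \<cdot> y)" for W xs y
    using that pullback_data_lift[of W xs y] by metis
  show "r = r'"
    if "r \<in> hom C W P \<and> r' \<in> hom C W P \<and> (\<forall>\<sigma>\<in>S. (pSX \<sigma> \<cdot> q1) \<cdot> r = (pSX \<sigma> \<cdot> q1) \<cdot> r') \<and>
      (pTY {0..m} \<cdot> q2) \<cdot> r = (pTY {0..m} \<cdot> q2) \<cdot> r'" for W r r'
    using that pullback_data_eqI[of r W r'] by blast
qed

lemma rel_matching_map_pullback_data:
  assumes u: "u \<in> hom C (X m) P"
    and u_legs: "\<And>\<sigma>. \<sigma> \<in> S \<Longrightarrow> pSX \<sigma> \<cdot> (q1 \<cdot> u) = leg Xm m \<sigma>"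
    and u_top: "\<And>\<sigma>. \<sigma> \<in> simplices m \<Longrightarrow> pTY \<sigma> \<cdot> (q2 \<cdot> u) = f (sdim \<sigma>) \<cdot> leg Xm m \<sigma>"
  shows "rel_matching_map C X Xm Y Ym f S m P (\<lambda>\<sigma>. pSX \<sigma> \<cdot> q1) (pTY {0..m} \<cdot> q2) u"
proof -
  note homs = pullback_data_homs
  have "(pSX \<sigma> \<cdot> q1) \<cdot> u = leg Xm m \<sigma>" if "\<sigma> \<in> S" for \<sigma>
    using homs u u_legs that by (simp add: comp_simps)
  moreover have "(pTY {0..m} \<cdot> q2) \<cdot> u = f m"
    using homs u u_top[OF top_simplex] smap_hom[OF X Y f, of m]
    by (simp add: comp_simps leg_top[OF X] comp_id_right)
  ultimately show ?thesis
    unfolding rel_matching_map_def using is_rel_matching_pullback_data u by blast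
qed

end

end

lemma (in descent_cat) rel_matching_map_cover_exists:
  assumes X: "is_simplicial C X Xm" and Y: "is_simplicial C Y Ym" and f: "is_smap C X Xm Y Ym f"
    and S: "S \<subseteq> simplices m"
    and cover: "rel_map_prop C (\<lambda>u. u \<in> Cov) X Xm Y Ym f m S (simplices m)"
  obtains R pX pY r where "rel_matching_map C X Xm Y Ym f S m R pX pY r" "r \<in> Cov"
proof -
  obtain LSX pSX where MSX: "is_Map C X Xm S LSX pSX"
    using Map_exists[OF X S] by blast
  obtain LSY pSY where MSY: "is_Map C Y Ym S LSY pSY"
    using Map_exists[OF Y S] by blast
  obtain LTY pTY where MTY: "is_Map C Y Ym (simplices m) LTY pTY"
    using Map_exists[OF Y subset_refl] by blast
  note SX = Map_compatible_family[OF MSX] and TY = Map_compatible_family[OF MTY]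
  obtain a where a: "a \<in> hom C LSX LSY" "\<And>\<sigma>. \<sigma> \<in> S \<Longrightarrow> pSY \<sigma> \<cdot> a = f (sdim \<sigma>) \<cdot> pSX \<sigma>"
    using Map_lift[OF MSY conjunct1[OF SX] compatible_family_map[OF X Y f S conjunct2[OF SX]]]
    by blast
  obtain b where b: "b \<in> hom C LTY LSY" "\<And>\<sigma>. \<sigma> \<in> S \<Longrightarrow> pSY \<sigma> \<cdot> b = pTY \<sigma>"
    using Map_lift[OF MSY conjunct1[OF TY] compatible_family_subset[OF conjunct2[OF TY] S]] by blast
  obtain P q1 q2 where pb: "is_pullback C a b P q1 q2"
    using pullback_exists[OF a(1) b(1)] by blast
  note data = X Y f S MSX MSY MTY a b pb
  obtain u where u: "u \<in> hom C (X m) P" "\<And>\<sigma>. \<sigma> \<in> S \<Longrightarrow> (pSX \<sigma> \<cdot> q1) \<cdot> u = leg Xm m \<sigma>"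
    "(pTY {0..m} \<cdot> q2) \<cdot> u = f m"
    using pullback_data_lift[OF data compatible_family_leg[OF X S] smap_hom[OF X Y f]
        leg_natural[OF X Y f subsetD[OF S]]] by blast
  note homs = pullback_data_homs[OF data]
  have u_legs: "pSX \<sigma> \<cdot> (q1 \<cdot> u) = leg Xm m \<sigma>" if "\<sigma> \<in> S" for \<sigma>
    using homs u that by (simp add: comp_simps)
  have u_top: "pTY \<sigma> \<cdot> (q2 \<cdot> u) = f (sdim \<sigma>) \<cdot> leg Xm m \<sigma>" if "\<sigma> \<in> simplices m" for \<sigma>
    using homs u that pullback_data_top[OF data] leg_hom[OF Y] leg_natural[OF X Y f]
    by (simp add: comp_simps)
  have "u \<in> Cov"
    using cover[unfolded rel_map_prop_def, rule_format, of LSX pSX LSY pSY LTY pTY a b P q1 q2 u]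
      MSX MSY MTY a b pb u(1) u_legs u_top by simp
  then show ?thesis
    using that rel_matching_map_pullback_data[OF data u(1) u_legs u_top] by blast
qed

section \<open>Lifting along the tower\<close>

text \<open>The objects of the proof, for \<open>\<Lambda> = \<Lambda>\<^sup>n\<^sup>+\<^sup>1\<^sub>n\<^sub>+\<^sub>1\<close>: \<open>P = M(\<partial>\<Delta>\<^sup>n, f)\<close>,
  \<open>P' = M(\<partial>\<Delta>\<^sup>n, g f)\<close>, \<open>Q = M(\<partial>\<Delta>\<^sup>n\<^sup>+\<^sup>1, g)\<close>, \<open>H = M(\<Lambda>, f)\<close> and \<open>P'' = M(\<partial>\<Delta>\<^sup>n\<^sup>+\<^sup>1, g f)\<close>,
  each with its canonical map from \<open>X\<close> or \<open>Y\<close>.\<close>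

locale boundary_lifting = descent_cat C Cov for C :: "('o,'m) cat" and Cov +
  fixes X :: "nat \<Rightarrow> 'o" and Xm and Y :: "nat \<Rightarrow> 'o" and Ym and Z :: "nat \<Rightarrow> 'o" and Zm
    and f g :: "nat \<Rightarrow> 'm" and n :: nat
    and P pX pY u and P' pX' pZ' u' and Q qY qZ v and H hX hY h and P'' pX'' pZ'' u''
  assumes X: "is_simplicial C X Xm" and Y: "is_simplicial C Y Ym" and Z: "is_simplicial C Z Zm"
    and f: "is_smap C X Xm Y Ym f" and g: "is_smap C Y Ym Z Zm g"
    and P: "rel_matching_map C X Xm Y Ym f (boundary n) n P pX pY u"
    and P': "rel_matching_map C X Xm Z Zm (\<lambda>k. g k \<cdot> f k) (boundary n) n P' pX' pZ' u'"
    and Q: "rel_matching_map C Y Ym Z Zm g (boundary (Suc n)) (Suc n) Q qY qZ v"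
    and H: "rel_matching_map C X Xm Y Ym f (horn (Suc n) (Suc n)) (Suc n) H hX hY h"
    and P'': "rel_matching_map C X Xm Z Zm (\<lambda>k. g k \<cdot> f k) (boundary (Suc n)) (Suc n) P'' pX'' pZ'' u''"
    and covers: "u' \<in> Cov" "v \<in> Cov" "h \<in> Cov" "u'' \<in> Cov"
begin

abbreviation "gf \<equiv> \<lambda>k. g k \<cdot> f k"

lemma gf_smap: "is_smap C X Xm Z Zm gf"
  by (rule smap_comp[OF X Y Z f g])

lemmas base_homs = smap_hom[OF X Y f] smap_hom[OF Y Z g] smap_hom[OF X Z gf_smap]
  rel_matching_map_homs[OF P] rel_matching_map_homs[OF P'] rel_matching_map_homs[OF Q]
  rel_matching_map_homs[OF H] rel_matching_map_homs[OF P'']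
  leg_hom[OF X] leg_hom[OF Y] leg_hom[OF Z] last_degen_hom[OF X] last_degen_hom[OF Y]
  last_degen_hom[OF Z] last_face_hom[OF X] last_face_hom[OF Y]

declare boundary_simplices [simp] horn_simplices [simp]

text \<open>The tower over \<open>P\<close>: a point of \<open>M1\<close> is an \<open>n\<close>-simplex \<open>x\<close> of \<open>X\<close> and a point
  \<open>(a, y)\<close> of \<open>P\<close> with the same image in \<open>P'\<close>; a point of \<open>M2\<close> adds an \<open>(n+1)\<close>-simplex
  \<open>y'\<close> of \<open>Y\<close> with boundary glued from \<open>f x\<close> and \<open>y\<close> and with \<open>g y' = s\<^sub>n (g y)\<close>;
  a point of \<open>M3\<close> adds an \<open>(n+1)\<close>-simplex \<open>x'\<close> of \<open>X\<close> with \<open>f x' = y'\<close> that agrees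
  with \<open>s\<^sub>n x\<close> on the horn.\<close>

definition alpha where
  "alpha = rel_matching_tuple C (boundary n) P' pX' pZ' P pX (g n \<cdot> pY)"

lemma alpha: "alpha \<in> hom C P P'" "\<And>\<sigma>. \<sigma> \<in> boundary n \<Longrightarrow> pX' \<sigma> \<cdot> alpha = pX \<sigma>"
  "pZ' \<cdot> alpha = g n \<cdot> pY"
proof -
  note R = rel_matching_map_legs(3)[OF P]
  have "gf (sdim \<sigma>) \<cdot> pX \<sigma> = leg Zm n \<sigma> \<cdot> (g n \<cdot> pY)" if "\<sigma> \<in> boundary n" for \<sigma>
  proof -
    have "gf (sdim \<sigma>) \<cdot> pX \<sigma> = g (sdim \<sigma>) \<cdot> (leg Ym n \<sigma> \<cdot> pY)"
      using that base_homs R unfolding is_rel_matching_def by (simp add: comp_simps)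
    then show ?thesis
      using leg_natural_comp[OF Y Z g boundary_simplices[OF that] rel_matching_map_homs(3)[OF P]]
      by simp
  qed
  then show "alpha \<in> hom C P P'" "\<And>\<sigma>. \<sigma> \<in> boundary n \<Longrightarrow> pX' \<sigma> \<cdot> alpha = pX \<sigma>"
    "pZ' \<cdot> alpha = g n \<cdot> pY"
    using rel_matching_tuple[OF rel_matching_map_legs(3)[OF P']] R
      hom_comp[OF rel_matching_map_homs(3)[OF P] smap_hom[OF Y Z g]]
    unfolding alpha_def is_rel_matching_def by blast+
qed

abbreviation "M1 \<equiv> pullback_obj C u' alpha"

abbreviation "m1x \<equiv> pullback_fst C u' alpha"

abbreviation "m1p \<equiv> pullback_snd C u' alpha"

lemma M1_pullback: "is_pullback C u' alpha M1 m1x m1p"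
  by (rule is_pullback_chosen[OF rel_matching_map_homs(1)[OF P'] alpha(1)])

lemma M1_homs: "m1x \<in> hom C M1 (X n)" "m1p \<in> hom C M1 P"
  using pullback_hom[OF M1_pullback] rel_matching_map_homs(1)[OF P'] alpha(1)
  unfolding hom_def by auto

lemma M1_legs:
  "\<And>\<sigma>. \<sigma> \<in> boundary n \<Longrightarrow> leg Xm n \<sigma> \<cdot> m1x = pX \<sigma> \<cdot> m1p" "gf n \<cdot> m1x = g n \<cdot> (pY \<cdot> m1p)"
  using rel_matching_map_pullback_legs[OF P' M1_pullback alpha(1)] M1_homs base_homs alpha
  by (simp_all add: comp_simps_left)

lemma M1_boundary_agree:
  assumes "\<sigma> \<in> boundary n"
  shows "leg Ym n \<sigma> \<cdot> (f n \<cdot> m1x) = leg Ym n \<sigma> \<cdot> (pY \<cdot> m1p)"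
proof -
  have "leg Ym n \<sigma> \<cdot> (f n \<cdot> m1x) = (f (sdim \<sigma>) \<cdot> pX \<sigma>) \<cdot> m1p"
    using leg_natural_comp[OF X Y f boundary_simplices[OF assms] M1_homs(1)] M1_legs(1)[OF assms]
      assms M1_homs base_homs by (simp add: comp_simps)
  then show ?thesis
    using rel_matching_map_square[OF P assms] assms M1_homs base_homs by (simp add: comp_simps)
qed

lemma M1_boundary_agree_comp:
  "\<sigma> \<in> boundary n \<Longrightarrow> t \<in> hom C V M1 \<Longrightarrow>
    leg Ym n \<sigma> \<cdot> (f n \<cdot> (m1x \<cdot> t)) = leg Ym n \<sigma> \<cdot> (pY \<cdot> (m1p \<cdot> t))"
  using M1_boundary_agree M1_homs base_homs by (simp add: comp_simps_left)

definition beta where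
  "beta = rel_matching_tuple C (boundary (Suc n)) Q qY qZ M1
     (glued_boundary C Ym n (f n \<cdot> m1x) (pY \<cdot> m1p)) (last_degen Zm n \<cdot> (g n \<cdot> (pY \<cdot> m1p)))"

lemma beta: "beta \<in> hom C M1 Q"
  "\<And>\<sigma>. \<sigma> \<in> boundary (Suc n) \<Longrightarrow> qY \<sigma> \<cdot> beta = glued_boundary C Ym n (f n \<cdot> m1x) (pY \<cdot> m1p) \<sigma>"
  "qZ \<cdot> beta = last_degen Zm n \<cdot> (g n \<cdot> (pY \<cdot> m1p))"
proof -
  have fx: "f n \<cdot> m1x \<in> hom C M1 (Y n)" and py: "pY \<cdot> m1p \<in> hom C M1 (Y n)"
    using M1_homs base_homs by (auto intro: hom_comp)
  have gpy: "g n \<cdot> (pY \<cdot> m1p) \<in> hom C M1 (Z n)"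
    using hom_comp[OF py] base_homs by blast
  have "g n \<cdot> (f n \<cdot> m1x) = g n \<cdot> (pY \<cdot> m1p)"
    using M1_legs(2) M1_homs base_homs by (simp add: comp_simps)
  then have "g (sdim \<sigma>) \<cdot> glued_boundary C Ym n (f n \<cdot> m1x) (pY \<cdot> m1p) \<sigma>
      = leg Zm (Suc n) \<sigma> \<cdot> (last_degen Zm n \<cdot> (g n \<cdot> (pY \<cdot> m1p)))" if "\<sigma> \<in> boundary (Suc n)" for \<sigma>
    using glued_boundary_map[OF Y Z g that fx py] glued_boundary_diag[OF Z that gpy] by simp
  then show "beta \<in> hom C M1 Q"
    "\<And>\<sigma>. \<sigma> \<in> boundary (Suc n) \<Longrightarrow> qY \<sigma> \<cdot> beta = glued_boundary C Ym n (f n \<cdot> m1x) (pY \<cdot> m1p) \<sigma>"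
    "qZ \<cdot> beta = last_degen Zm n \<cdot> (g n \<cdot> (pY \<cdot> m1p))"
    using rel_matching_tuple[OF rel_matching_map_legs(3)[OF Q]
        glued_boundary_compatible[OF Y fx py M1_boundary_agree] hom_comp[OF gpy last_degen_hom[OF Z]]]
    unfolding beta_def by blast+
qed

abbreviation "M2 \<equiv> pullback_obj C v beta"

abbreviation "m2y \<equiv> pullback_fst C v beta"

abbreviation "m2m \<equiv> pullback_snd C v beta"

lemma M2_pullback: "is_pullback C v beta M2 m2y m2m"
  by (rule is_pullback_chosen[OF rel_matching_map_homs(1)[OF Q] beta(1)])

lemma M2_homs: "m2y \<in> hom C M2 (Y (Suc n))" "m2m \<in> hom C M2 M1"
  using pullback_hom[OF M2_pullback] rel_matching_map_homs(1)[OF Q] beta(1)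
  unfolding hom_def by auto

lemma M2_legs:
  "\<And>\<sigma>. \<sigma> \<in> boundary (Suc n) \<Longrightarrow>
    leg Ym (Suc n) \<sigma> \<cdot> m2y = glued_boundary C Ym n (f n \<cdot> m1x) (pY \<cdot> m1p) \<sigma> \<cdot> m2m"
  "g (Suc n) \<cdot> m2y = (last_degen Zm n \<cdot> (g n \<cdot> (pY \<cdot> m1p))) \<cdot> m2m"
  using rel_matching_map_pullback_legs[OF Q M2_pullback beta(1)] M2_homs base_homs beta
  by (simp_all add: comp_simps_left)

definition gamma where
  "gamma = rel_matching_tuple C (horn (Suc n) (Suc n)) H hX hY M2
     (\<lambda>\<sigma>. leg Xm (Suc n) \<sigma> \<cdot> (last_degen Xm n \<cdot> (m1x \<cdot> m2m))) m2y"

lemma gamma: "gamma \<in> hom C M2 H"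
  "\<And>\<sigma>. \<sigma> \<in> horn (Suc n) (Suc n) \<Longrightarrow> hX \<sigma> \<cdot> gamma = leg Xm (Suc n) \<sigma> \<cdot> (last_degen Xm n \<cdot> (m1x \<cdot> m2m))"
  "hY \<cdot> gamma = m2y"
proof -
  have x: "m1x \<cdot> m2m \<in> hom C M2 (X n)"
    using hom_comp M2_homs M1_homs by blast
  have fx: "f n \<cdot> m1x \<in> hom C M1 (Y n)" and py: "pY \<cdot> m1p \<in> hom C M1 (Y n)"
    using M1_homs base_homs by (auto intro: hom_comp)
  have "f (sdim \<sigma>) \<cdot> (leg Xm (Suc n) \<sigma> \<cdot> (last_degen Xm n \<cdot> (m1x \<cdot> m2m))) = leg Ym (Suc n) \<sigma> \<cdot> m2y"
    if \<sigma>: "\<sigma> \<in> horn (Suc n) (Suc n)" for \<sigma>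
  proof -
    have \<sigma>': "\<sigma> \<in> boundary (Suc n)"
      using \<sigma> horn_subset_boundary by blast
    have "leg Ym (Suc n) \<sigma> \<cdot> m2y
        = glued_boundary C Ym n ((f n \<cdot> m1x) \<cdot> m2m) ((pY \<cdot> m1p) \<cdot> m2m) \<sigma>"
      using M2_legs(1)[OF \<sigma>'] glued_boundary_comp[OF Y \<sigma>' fx py M2_homs(2)] by simp
    also have "\<dots> = leg Ym (Suc n) \<sigma> \<cdot> (last_degen Ym n \<cdot> ((f n \<cdot> m1x) \<cdot> m2m))"
      using glued_boundary_horn[OF Y \<sigma> hom_comp[OF M2_homs(2) fx]] M1_boundary_agree_comp M2_homs
        M1_homs base_homs by (simp add: comp_simps_left)
    finally show ?thesis
      using leg_natural_comp[OF X Y f horn_simplices[OF \<sigma>] hom_comp[OF x last_degen_hom[OF X]]]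
        last_degen_natural[OF X Y f] M1_homs M2_homs base_homs \<sigma> by (simp add: comp_simps_left)
  qed
  then show "gamma \<in> hom C M2 H"
    "\<And>\<sigma>. \<sigma> \<in> horn (Suc n) (Suc n) \<Longrightarrow> hX \<sigma> \<cdot> gamma = leg Xm (Suc n) \<sigma> \<cdot> (last_degen Xm n \<cdot> (m1x \<cdot> m2m))"
    "hY \<cdot> gamma = m2y"
    using rel_matching_tuple[OF rel_matching_map_legs(3)[OF H] compatible_family_legs[OF X _
        hom_comp[OF x last_degen_hom[OF X]]] M2_homs(1)] horn_simplices
    unfolding gamma_def by blast+
qed

abbreviation "M3 \<equiv> pullback_obj C h gamma"

abbreviation "m3x \<equiv> pullback_fst C h gamma"

abbreviation "m3m \<equiv> pullback_snd C h gamma"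

lemma M3_pullback: "is_pullback C h gamma M3 m3x m3m"
  by (rule is_pullback_chosen[OF rel_matching_map_homs(1)[OF H] gamma(1)])

lemma M3_homs: "m3x \<in> hom C M3 (X (Suc n))" "m3m \<in> hom C M3 M2"
  using pullback_hom[OF M3_pullback] rel_matching_map_homs(1)[OF H] gamma(1)
  unfolding hom_def by auto

lemma M3_legs:
  "\<And>\<sigma>. \<sigma> \<in> horn (Suc n) (Suc n) \<Longrightarrow>
    leg Xm (Suc n) \<sigma> \<cdot> m3x = leg Xm (Suc n) \<sigma> \<cdot> (last_degen Xm n \<cdot> ((m1x \<cdot> m2m) \<cdot> m3m))"
  "f (Suc n) \<cdot> m3x = m2y \<cdot> m3m"
  using rel_matching_map_pullback_legs[OF H M3_pullback gamma(1)] M3_homs M2_homs M1_homs base_homs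
    gamma by (simp_all add: comp_simps_left)

definition "tower_base = (m1x \<cdot> m2m) \<cdot> m3m"
definition "tower_proj = (m1p \<cdot> m2m) \<cdot> m3m"
definition "tower_face = last_face Xm n \<cdot> m3x"

lemma tower_homs:
  "tower_base \<in> hom C M3 (X n)" "tower_proj \<in> hom C M3 P" "tower_face \<in> hom C M3 (X n)"
  unfolding tower_base_def tower_proj_def tower_face_def
  using M1_homs M2_homs M3_homs last_face_hom[OF X] by (auto intro: hom_comp)

lemma tower_proj_cover: "tower_proj \<in> Cov"
proof -
  have "m1p \<in> Cov" "m2m \<in> Cov" "m3m \<in> Cov"
    using cover_pullback covers M1_pullback M2_pullback M3_pullback by blast+
  then show ?thesis
    unfolding tower_proj_def using M1_homs M2_homs M3_homs
    by (meson cover_comp hom_comp)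
qed

lemma tower_face_boundary:
  assumes "\<sigma> \<in> boundary n"
  shows "leg Xm n \<sigma> \<cdot> tower_face = leg Xm n \<sigma> \<cdot> tower_base"
proof -
  have "leg Xm n \<sigma> \<cdot> tower_face = leg Xm (Suc n) \<sigma> \<cdot> m3x"
    using leg_last_face[OF X boundary_simplices[OF assms]] assms M3_homs base_homs
    unfolding tower_face_def by (simp add: comp_simps_left)
  also have "\<dots> = leg Xm n \<sigma> \<cdot> tower_base"
    using M3_legs(1)[OF boundary_in_horn_Suc[OF assms]]
      leg_last_degen_comp[OF X boundary_simplices[OF assms] tower_homs(1)]
    unfolding tower_base_def by simp
  finally show ?thesis .
qed

lemma f_tower_face: "f n \<cdot> tower_face = pY \<cdot> tower_proj"
proof -
  have top: "{0..n} \<in> boundary (Suc n)"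
    by (rule simplices_in_boundary_Suc[OF top_simplex])
  have "last_face Ym n \<cdot> m2y = (pY \<cdot> m1p) \<cdot> m2m"
    using M2_legs(1)[OF top] glued_boundary_last[OF Y hom_comp[OF M1_homs(2)]] base_homs
    by (simp add: leg_Suc_top[OF Y])
  note homs = M1_homs M2_homs M3_homs base_homs
  have "f n \<cdot> tower_face = (f n \<cdot> last_face Xm n) \<cdot> m3x"
    using homs unfolding tower_face_def by (simp add: comp_simps)
  also have "\<dots> = last_face Ym n \<cdot> (m2y \<cdot> m3m)"
    using last_face_natural[OF X Y f] M3_legs(2) homs by (simp add: comp_simps)
  also have "\<dots> = (last_face Ym n \<cdot> m2y) \<cdot> m3m"
    using homs by (simp add: comp_simps)
  finally show ?thesis
    using \<open>last_face Ym n \<cdot> m2y = (pY \<cdot> m1p) \<cdot> m2m\<close> homs unfolding tower_proj_def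
    by (simp add: comp_simps)
qed

lemma u_tower_face: "u \<cdot> tower_face = tower_proj"
proof -
  have "leg Xm n \<sigma> \<cdot> tower_face = pX \<sigma> \<cdot> tower_proj" if "\<sigma> \<in> boundary n" for \<sigma>
    using tower_face_boundary[OF that] M1_legs(1)[OF that] that M1_homs M2_homs M3_homs base_homs
    unfolding tower_base_def tower_proj_def by (simp add: comp_simps_left)
  then show ?thesis
    using rel_matching_map_comp_eq_iff[OF P tower_homs(3) tower_homs(2)] f_tower_face by blast
qed

lemma gf_tower_face: "gf n \<cdot> tower_face = gf n \<cdot> tower_base"
proof -
  note homs = M1_homs M2_homs M3_homs base_homs tower_homs
  have "gf n \<cdot> tower_face = ((g n \<cdot> pY) \<cdot> m1p) \<cdot> (m2m \<cdot> m3m)"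
    using f_tower_face homs unfolding tower_proj_def by (simp add: comp_simps)
  also have "\<dots> = gf n \<cdot> tower_base"
    using M1_legs(2) homs unfolding tower_base_def by (simp add: comp_simps_left)
  finally show ?thesis .
qed

lemma tower_boundary:
  assumes "\<sigma> \<in> boundary (Suc n)"
  shows "leg Xm (Suc n) \<sigma> \<cdot> m3x = glued_boundary C Xm n tower_base tower_face \<sigma>"
proof (cases "Suc n \<in> \<sigma>")
  case True
  then show ?thesis
    using M3_legs(1)[OF boundary_Suc_last_in_horn[OF assms True]]
    unfolding glued_boundary_def tower_base_def by simp
next
  case False
  then have "\<sigma> \<in> simplices n"
    by (rule boundary_Suc_not_last[OF assms])
  then show ?thesis
    using False leg_last_face[OF X] M3_homs base_homs
    unfolding glued_boundary_def tower_face_def by (simp add: comp_simps_left)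
qed

lemma gf_M3: "gf (Suc n) \<cdot> m3x = last_degen Zm n \<cdot> (gf n \<cdot> tower_face)"
proof -
  note homs = M1_homs M2_homs M3_homs base_homs tower_homs
  have "gf (Suc n) \<cdot> m3x = (g (Suc n) \<cdot> m2y) \<cdot> m3m"
    using M3_legs(2) homs by (simp add: comp_simps)
  then show ?thesis
    using M2_legs(2) f_tower_face homs unfolding tower_proj_def by (simp add: comp_simps)
qed

lemma alpha_u: "alpha \<cdot> u = u'"
proof (rule rel_matching_eqI[OF rel_matching_map_legs(3)[OF P']])
  note homs = base_homs alpha(1)
  show "alpha \<cdot> u \<in> hom C (X n) P'" "u' \<in> hom C (X n) P'"
    using homs by (auto intro: hom_comp)
  show "pX' \<sigma> \<cdot> (alpha \<cdot> u) = pX' \<sigma> \<cdot> u'" if "\<sigma> \<in> boundary n" for \<sigma>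
    using that rel_matching_map_legs(1)[OF P that] rel_matching_map_legs(1)[OF P' that] alpha(2)[OF that]
      homs by (simp add: comp_simps_left)
  have "pZ' \<cdot> (alpha \<cdot> u) = g n \<cdot> (pY \<cdot> u)"
    using alpha(3) homs by (simp add: comp_simps_left)
  then show "pZ' \<cdot> (alpha \<cdot> u) = pZ' \<cdot> u'"
    using rel_matching_map_legs(2)[OF P] rel_matching_map_legs(2)[OF P'] by simp
qed

lemma M1_lift:
  assumes x: "x \<in> hom C V (X n)" "x' \<in> hom C V (X n)" and eq: "u' \<cdot> x = u' \<cdot> x'"
  obtains t where "t \<in> hom C V M1" "m1x \<cdot> t = x" "m1p \<cdot> t = u \<cdot> x'"
proof -
  have "u' \<cdot> x = alpha \<cdot> (u \<cdot> x')"
    using eq alpha_u comp_assoc[OF x(2) rel_matching_map_homs(1)[OF P] alpha(1)] by simp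
  moreover have "x \<in> hom C V (Dom C u')" "u \<cdot> x' \<in> hom C V (Dom C alpha)"
    using x hom_comp[OF x(2) rel_matching_map_homs(1)[OF P]] rel_matching_map_homs(1)[OF P'] alpha(1)
    unfolding hom_def by auto
  ultimately show ?thesis
    using pullback_lift[OF M1_pullback] that by blast
qed

lemma M2_lift:
  assumes t: "t \<in> hom C V M1" and y: "y \<in> hom C V (Y (Suc n))"
    and legs: "\<And>\<sigma>. \<sigma> \<in> boundary (Suc n) \<Longrightarrow>
      leg Ym (Suc n) \<sigma> \<cdot> y = glued_boundary C Ym n (f n \<cdot> (m1x \<cdot> t)) (pY \<cdot> (m1p \<cdot> t)) \<sigma>"
    and top: "g (Suc n) \<cdot> y = last_degen Zm n \<cdot> (g n \<cdot> (pY \<cdot> (m1p \<cdot> t)))"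
  obtains t' where "t' \<in> hom C V M2" "m2y \<cdot> t' = y" "m2m \<cdot> t' = t"
proof (rule rel_matching_map_pullback_lift[OF Q M2_pullback beta(1) y t])
  note homs = M1_homs base_homs beta(1)
  show "leg Ym (Suc n) \<sigma> \<cdot> y = qY \<sigma> \<cdot> (beta \<cdot> t)" if "\<sigma> \<in> boundary (Suc n)" for \<sigma>
    using legs[OF that] beta(2)[OF that] homs t that
      glued_boundary_comp[OF Y that hom_comp[OF M1_homs(1) smap_hom[OF X Y f]]
        hom_comp[OF M1_homs(2) rel_matching_map_homs(3)[OF P]] t]
    by (simp add: comp_simps_left)
  show "g (Suc n) \<cdot> y = qZ \<cdot> (beta \<cdot> t)"
    using top beta(3) homs t by (simp add: comp_simps_left)
qed

lemma M3_lift: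
  assumes t: "t \<in> hom C V M2" and z: "z \<in> hom C V (X (Suc n))"
    and legs: "\<And>\<sigma>. \<sigma> \<in> horn (Suc n) (Suc n) \<Longrightarrow>
      leg Xm (Suc n) \<sigma> \<cdot> z = leg Xm (Suc n) \<sigma> \<cdot> (last_degen Xm n \<cdot> (m1x \<cdot> (m2m \<cdot> t)))"
    and top: "f (Suc n) \<cdot> z = m2y \<cdot> t"
  obtains t' where "t' \<in> hom C V M3" "m3x \<cdot> t' = z" "m3m \<cdot> t' = t"
proof (rule rel_matching_map_pullback_lift[OF H M3_pullback gamma(1) z t])
  note homs = M1_homs M2_homs base_homs gamma(1)
  show "leg Xm (Suc n) \<sigma> \<cdot> z = hX \<sigma> \<cdot> (gamma \<cdot> t)" if "\<sigma> \<in> horn (Suc n) (Suc n)" for \<sigma>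
    using legs[OF that] gamma(2)[OF that] homs t that by (simp add: comp_simps_left)
  show "f (Suc n) \<cdot> z = hY \<cdot> (gamma \<cdot> t)"
    using top gamma(3) homs t by (simp add: comp_simps_left)
qed

lemma u'_comp_eq_iff:
  "x \<in> hom C V (X n) \<Longrightarrow> x' \<in> hom C V (X n) \<Longrightarrow>
    u' \<cdot> x = u' \<cdot> x' \<longleftrightarrow> (\<forall>\<sigma>\<in>boundary n. leg Xm n \<sigma> \<cdot> x = leg Xm n \<sigma> \<cdot> x') \<and> gf n \<cdot> x = gf n \<cdot> x'"
  by (rule rel_matching_map_eq_iff[OF P'])

lemma tower_lift:
  assumes z: "z \<in> hom C V (X (Suc n))" and x: "xa \<in> hom C V (X n)" "xb \<in> hom C V (X n)"
    and eq: "u' \<cdot> xa = u' \<cdot> xb"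
    and legs: "\<And>\<sigma>. \<sigma> \<in> boundary (Suc n) \<Longrightarrow> leg Xm (Suc n) \<sigma> \<cdot> z = glued_boundary C Xm n xa xb \<sigma>"
    and top: "gf (Suc n) \<cdot> z = last_degen Zm n \<cdot> (gf n \<cdot> xb)"
  obtains t where "t \<in> hom C V M3" "m3x \<cdot> t = z" "tower_base \<cdot> t = xa"
proof -
  note homs = M1_homs M2_homs M3_homs base_homs
  have agree: "\<And>\<sigma>. \<sigma> \<in> boundary n \<Longrightarrow> leg Xm n \<sigma> \<cdot> xa = leg Xm n \<sigma> \<cdot> xb"
    using u'_comp_eq_iff[OF x] eq by blast
  obtain t1 where t1: "t1 \<in> hom C V M1" "m1x \<cdot> t1 = xa" "m1p \<cdot> t1 = u \<cdot> xb"
    using M1_lift[OF x eq] by blast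
  have pY_t1: "pY \<cdot> (m1p \<cdot> t1) = f n \<cdot> xb"
    using t1(3) rel_matching_map_legs(2)[OF P] homs x by (simp add: comp_simps_left)
  have fz: "f (Suc n) \<cdot> z \<in> hom C V (Y (Suc n))"
    using hom_comp[OF z] homs by blast
  obtain t2 where t2: "t2 \<in> hom C V M2" "m2y \<cdot> t2 = f (Suc n) \<cdot> z" "m2m \<cdot> t2 = t1"
  proof (rule M2_lift[OF t1(1) fz])
    show "leg Ym (Suc n) \<sigma> \<cdot> (f (Suc n) \<cdot> z) =
        glued_boundary C Ym n (f n \<cdot> (m1x \<cdot> t1)) (pY \<cdot> (m1p \<cdot> t1)) \<sigma>" if "\<sigma> \<in> boundary (Suc n)" for \<sigma>
      using leg_natural_comp[OF X Y f _ z, of \<sigma>] legs[OF that] glued_boundary_map[OF X Y f that x] that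
        t1(2) pY_t1 by simp
    show "g (Suc n) \<cdot> (f (Suc n) \<cdot> z) = last_degen Zm n \<cdot> (g n \<cdot> (pY \<cdot> (m1p \<cdot> t1)))"
      using top pY_t1 homs z x by (simp add: comp_simps)
  qed
  obtain t3 where t3: "t3 \<in> hom C V M3" "m3x \<cdot> t3 = z" "m3m \<cdot> t3 = t2"
  proof (rule M3_lift[OF t2(1) z _ t2(2)[symmetric]])
    show "leg Xm (Suc n) \<sigma> \<cdot> z = leg Xm (Suc n) \<sigma> \<cdot> (last_degen Xm n \<cdot> (m1x \<cdot> (m2m \<cdot> t2)))"
      if "\<sigma> \<in> horn (Suc n) (Suc n)" for \<sigma>
      using legs[OF subsetD[OF horn_subset_boundary that]] glued_boundary_horn[OF X that x(1) agree]
        t1(2) t2(3) by simp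
  qed
  have "tower_base \<cdot> t3 = xa"
    using t1 t2 t3 homs unfolding tower_base_def by (simp add: comp_simps)
  then show ?thesis
    using that t3 by blast
qed

lemma tower_eqI:
  assumes t: "t \<in> hom C V M3" "t' \<in> hom C V M3"
    and eq: "m3x \<cdot> t = m3x \<cdot> t'" "tower_base \<cdot> t = tower_base \<cdot> t'"
  shows "t = t'"
proof (rule pullback_eqI[OF M3_pullback t eq(1)])
  note homs = M1_homs M2_homs M3_homs base_homs tower_homs
  have "m1p \<cdot> (m2m \<cdot> (m3m \<cdot> s)) = u \<cdot> (last_face Xm n \<cdot> (m3x \<cdot> s))" if "s \<in> hom C V M3" for s
    using u_tower_face homs that unfolding tower_proj_def tower_face_def by (simp add: comp_simps_left)
  then have "m2m \<cdot> (m3m \<cdot> t) = m2m \<cdot> (m3m \<cdot> t')"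
    using pullback_eqI[OF M1_pullback] eq t homs unfolding tower_base_def
    by (simp add: comp_simps hom_comp)
  moreover have "m2y \<cdot> (m3m \<cdot> s) = f (Suc n) \<cdot> (m3x \<cdot> s)" if "s \<in> hom C V M3" for s
    using M3_legs(2) homs that by (simp add: comp_simps_left)
  then have "m2y \<cdot> (m3m \<cdot> t) = m2y \<cdot> (m3m \<cdot> t')"
    using eq(1) t by simp
  ultimately show "m3m \<cdot> t = m3m \<cdot> t'"
    using pullback_eqI[OF M2_pullback] t homs by (meson hom_comp)
qed

abbreviation "K \<equiv> pullback_obj C u' u'"

abbreviation "k1 \<equiv> pullback_fst C u' u'"

abbreviation "k2 \<equiv> pullback_snd C u' u'"

lemma K_pullback: "is_pullback C u' u' K k1 k2"
  by (rule is_pullback_chosen[OF rel_matching_map_homs(1)[OF P'] rel_matching_map_homs(1)[OF P']])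

lemma K_homs: "k1 \<in> hom C K (X n)" "k2 \<in> hom C K (X n)" "u' \<cdot> k1 = u' \<cdot> k2"
  using pullback_hom[OF K_pullback] rel_matching_map_homs(1)[OF P'] unfolding hom_def by auto

definition delta where
  "delta = rel_matching_tuple C (boundary (Suc n)) P'' pX'' pZ'' K
     (glued_boundary C Xm n k1 k2) (last_degen Zm n \<cdot> (gf n \<cdot> k2))"

lemma delta: "delta \<in> hom C K P''"
  "\<And>\<sigma>. \<sigma> \<in> boundary (Suc n) \<Longrightarrow> pX'' \<sigma> \<cdot> delta = glued_boundary C Xm n k1 k2 \<sigma>"
  "pZ'' \<cdot> delta = last_degen Zm n \<cdot> (gf n \<cdot> k2)"
proof -
  have agree: "\<And>\<sigma>. \<sigma> \<in> boundary n \<Longrightarrow> leg Xm n \<sigma> \<cdot> k1 = leg Xm n \<sigma> \<cdot> k2"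
    and "gf n \<cdot> k1 = gf n \<cdot> k2"
    using u'_comp_eq_iff[OF K_homs(1,2)] K_homs(3) by blast+
  moreover have gk: "gf n \<cdot> k2 \<in> hom C K (Z n)"
    using hom_comp[OF K_homs(2) smap_hom[OF X Z gf_smap]] .
  ultimately have "gf (sdim \<sigma>) \<cdot> glued_boundary C Xm n k1 k2 \<sigma>
      = leg Zm (Suc n) \<sigma> \<cdot> (last_degen Zm n \<cdot> (gf n \<cdot> k2))" if "\<sigma> \<in> boundary (Suc n)" for \<sigma>
    using glued_boundary_map[OF X Z gf_smap that K_homs(1,2)] glued_boundary_diag[OF Z that gk] by simp
  then show "delta \<in> hom C K P''"
    "\<And>\<sigma>. \<sigma> \<in> boundary (Suc n) \<Longrightarrow> pX'' \<sigma> \<cdot> delta = glued_boundary C Xm n k1 k2 \<sigma>"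
    "pZ'' \<cdot> delta = last_degen Zm n \<cdot> (gf n \<cdot> k2)"
    using rel_matching_tuple[OF rel_matching_map_legs(3)[OF P'']
        glued_boundary_compatible[OF X K_homs(1,2) agree] hom_comp[OF gk last_degen_hom[OF Z]]]
    unfolding delta_def by blast+
qed

lemma u''_comp_eq_delta_iff:
  assumes z: "z \<in> hom C V (X (Suc n))" and w: "w \<in> hom C V K"
  shows "u'' \<cdot> z = delta \<cdot> w \<longleftrightarrow>
    (\<forall>\<sigma>\<in>boundary (Suc n). leg Xm (Suc n) \<sigma> \<cdot> z = glued_boundary C Xm n (k1 \<cdot> w) (k2 \<cdot> w) \<sigma>) \<and>
    gf (Suc n) \<cdot> z = last_degen Zm n \<cdot> (gf n \<cdot> (k2 \<cdot> w))"
proof -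
  note homs = K_homs delta(1) base_homs
  have "pX'' \<sigma> \<cdot> (delta \<cdot> w) = glued_boundary C Xm n (k1 \<cdot> w) (k2 \<cdot> w) \<sigma>"
    if "\<sigma> \<in> boundary (Suc n)" for \<sigma>
    using delta(2)[OF that] glued_boundary_comp[OF X that K_homs(1,2) w] homs w that
    by (simp add: comp_simps_left)
  moreover have "pZ'' \<cdot> (delta \<cdot> w) = last_degen Zm n \<cdot> (gf n \<cdot> (k2 \<cdot> w))"
    using delta(3) homs w by (simp add: comp_simps_left)
  ultimately show ?thesis
    using rel_matching_map_comp_eq_iff[OF P'' z hom_comp[OF w delta(1)]] by simp
qed

lemma delta_lift:
  assumes ka: "ka \<in> hom C M3 K" "k1 \<cdot> ka = tower_base" "k2 \<cdot> ka = tower_face"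
    and z: "z \<in> hom C V (X (Suc n))" and w: "w \<in> hom C V K" and zw: "u'' \<cdot> z = delta \<cdot> w"
  obtains t where "t \<in> hom C V M3" "m3x \<cdot> t = z" "ka \<cdot> t = w"
proof -
  note homs = K_homs base_homs M3_homs tower_homs
  have x: "k1 \<cdot> w \<in> hom C V (X n)" "k2 \<cdot> w \<in> hom C V (X n)"
    using w K_homs hom_comp by blast+
  have "u' \<cdot> (k1 \<cdot> w) = u' \<cdot> (k2 \<cdot> w)"
    using K_homs w rel_matching_map_homs(1)[OF P'] by (simp add: comp_simps_left)
  then obtain t where t: "t \<in> hom C V M3" "m3x \<cdot> t = z" "tower_base \<cdot> t = k1 \<cdot> w"
    using tower_lift[OF z x] zw u''_comp_eq_delta_iff[OF z w] by blast
  have "k2 \<cdot> (ka \<cdot> t) = tower_face \<cdot> t"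
    using ka t homs by (simp add: comp_simps_left)
  also have "\<dots> = leg Xm (Suc n) {0..n} \<cdot> z"
    using t homs leg_Suc_top[OF X] unfolding tower_face_def by (simp add: comp_simps)
  also have "\<dots> = k2 \<cdot> w"
    using zw u''_comp_eq_delta_iff[OF z w] glued_boundary_last[OF X x(2)]
      simplices_in_boundary_Suc[OF top_simplex] by simp
  finally have "k2 \<cdot> (ka \<cdot> t) = k2 \<cdot> w" .
  moreover have "k1 \<cdot> (ka \<cdot> t) = k1 \<cdot> w"
    using ka t homs by (simp add: comp_simps_left)
  ultimately have "ka \<cdot> t = w"
    using pullback_eqI[OF K_pullback hom_comp[OF t(1) ka(1)] w] by blast
  then show ?thesis
    using that t by blast
qed

lemma M3_is_pullback:
  assumes ka: "ka \<in> hom C M3 K" "k1 \<cdot> ka = tower_base" "k2 \<cdot> ka = tower_face"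
  shows "is_pullback C u'' delta M3 m3x ka"
  unfolding is_pullback_def
proof (intro conjI allI impI)
  note homs = K_homs delta(1) base_homs M3_homs tower_homs
  show "u'' \<in> Ar C" "delta \<in> Ar C" "Cod C u'' = Cod C delta" "m3x \<in> hom C M3 (Dom C u'')"
    "ka \<in> hom C M3 (Dom C delta)"
    using homs ka unfolding hom_def by auto
  show "u'' \<cdot> m3x = delta \<cdot> ka"
    using u''_comp_eq_delta_iff[OF M3_homs(1) ka(1)] ka tower_boundary gf_M3 by simp
next
  fix V z w assume "z \<in> hom C V (Dom C u'') \<and> w \<in> hom C V (Dom C delta) \<and> u'' \<cdot> z = delta \<cdot> w"
  then have z: "z \<in> hom C V (X (Suc n))" and w: "w \<in> hom C V K" and zw: "u'' \<cdot> z = delta \<cdot> w"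
    using rel_matching_map_homs(1)[OF P''] delta(1) unfolding hom_def by auto
  obtain t where t: "t \<in> hom C V M3" "m3x \<cdot> t = z" "ka \<cdot> t = w"
    using delta_lift[OF ka z w zw] by blast
  have base: "tower_base \<cdot> s = k1 \<cdot> (ka \<cdot> s)" if "s \<in> hom C V M3" for s
    using ka that K_homs M3_homs tower_homs by (simp add: comp_simps_left)
  show "\<exists>!t. t \<in> hom C V M3 \<and> m3x \<cdot> t = z \<and> ka \<cdot> t = w"
  proof (rule ex1I[of _ t])
    fix t' assume t': "t' \<in> hom C V M3 \<and> m3x \<cdot> t' = z \<and> ka \<cdot> t' = w"
    then have "tower_base \<cdot> t' = tower_base \<cdot> t"
      using t base[of t'] base[of t] by simp
    then show "t' = t"
      using tower_eqI t t' by blast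
  qed (use t in blast)
qed

lemma tower_face_cover: "tower_face \<in> Cov"
proof -
  have "u' \<cdot> tower_base = u' \<cdot> tower_face"
    using u'_comp_eq_iff[OF tower_homs(1,3)] tower_face_boundary gf_tower_face by simp
  moreover have "Dom C u' = X n"
    using rel_matching_map_homs(1)[OF P'] unfolding hom_def by simp
  ultimately obtain ka where ka: "ka \<in> hom C M3 K" "k1 \<cdot> ka = tower_base" "k2 \<cdot> ka = tower_face"
    using pullback_lift[OF K_pullback] tower_homs(1,3) by metis
  have "ka \<in> Cov"
    by (rule cover_pullback[OF covers(4) M3_is_pullback[OF ka]])
  moreover have "k2 \<in> Cov"
    by (rule cover_pullback[OF covers(1) K_pullback])
  ultimately show ?thesis
    using cover_comp[OF _ _ ka(1) K_homs(2)] ka(3) by simp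
qed

theorem boundary_map_cover: "u \<in> Cov"
  using cover_cancel[OF tower_face_cover tower_homs(3) rel_matching_map_homs(1)[OF P]]
    u_tower_face tower_proj_cover by simp

end

section \<open>Two out of three for hypercovers\<close>

context descent_cat
begin

lemma hypercoverI:
  assumes X: "is_simplicial C X Xm" and Y: "is_simplicial C Y Ym" and f: "is_smap C X Xm Y Ym f"
    and cover: "\<And>n P pX pY u. rel_matching_map C X Xm Y Ym f (boundary n) n P pX pY u \<Longrightarrow> u \<in> Cov"
  shows "hypercover C Cov X Xm Y Ym f"
  unfolding hypercover_def rel_map_prop_def
proof (intro allI impI, elim conjE)
  fix n LSX pSX LSY pSY LTY pTY a b P q1 q2 u
  assume MSX: "is_Map C X Xm (boundary n) LSX pSX" and MSY: "is_Map C Y Ym (boundary n) LSY pSY"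
    and MTY: "is_Map C Y Ym (simplices n) LTY pTY"
    and a: "a \<in> hom C LSX LSY" "\<forall>\<sigma>\<in>boundary n. pSY \<sigma> \<cdot> a = f (sdim \<sigma>) \<cdot> pSX \<sigma>"
    and b: "b \<in> hom C LTY LSY" "\<forall>\<sigma>\<in>boundary n. pSY \<sigma> \<cdot> b = pTY \<sigma>"
    and pb: "is_pullback C a b P q1 q2" and u: "u \<in> hom C (X n) P"
    and u_legs: "\<forall>\<sigma>\<in>boundary n. pSX \<sigma> \<cdot> (q1 \<cdot> u) = leg Xm n \<sigma>"
    and u_top: "\<forall>\<sigma>\<in>simplices n. pTY \<sigma> \<cdot> (q2 \<cdot> u) = f (sdim \<sigma>) \<cdot> leg Xm n \<sigma>"
  show "u \<in> Cov"
    by (rule cover[OF rel_matching_map_pullback_data[OF X Y f boundary_subset_simplices MSX MSY MTY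
          a(1) a(2)[rule_format] b(1) b(2)[rule_format] pb u u_legs[rule_format] u_top[rule_format]]])
qed

lemma hypercover_rel_matching_map_cover:
  assumes "hypercover C Cov X Xm Y Ym f"
    and X: "is_simplicial C X Xm" and Y: "is_simplicial C Y Ym" and f: "is_smap C X Xm Y Ym f"
  obtains R pX pY r where "rel_matching_map C X Xm Y Ym f (boundary m) m R pX pY r" "r \<in> Cov"
proof -
  have "rel_map_prop C (\<lambda>u. u \<in> Cov) X Xm Y Ym f m (boundary m) (simplices m)"
    using assms(1) unfolding hypercover_def by blast
  then show ?thesis
    using rel_matching_map_cover_exists[OF X Y f boundary_subset_simplices] that by blast
qed

lemma fibration_rel_matching_map_cover:
  assumes "fibration C Cov X Xm Y Ym f"
    and X: "is_simplicial C X Xm" and Y: "is_simplicial C Y Ym" and f: "is_smap C X Xm Y Ym f"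
  obtains R pX pY r where
    "rel_matching_map C X Xm Y Ym f (horn (Suc n) (Suc n)) (Suc n) R pX pY r" "r \<in> Cov"
proof -
  have horn: "horn (Suc n) (Suc n) \<subseteq> simplices (Suc n)"
    using horn_simplices by blast
  have "rel_map_prop C (\<lambda>u. u \<in> Cov) X Xm Y Ym f (Suc n) (horn (Suc n) (Suc n)) (simplices (Suc n))"
    using assms(1) unfolding fibration_def by blast
  then show ?thesis
    using rel_matching_map_cover_exists[OF X Y f horn] that by blast
qed

lemma boundary_rel_matching_map_cover:
  assumes X: "is_simplicial C X Xm" and Y: "is_simplicial C Y Ym" and Z: "is_simplicial C Z Zm"
    and f: "is_smap C X Xm Y Ym f" and g: "is_smap C Y Ym Z Zm g"
    and fib: "fibration C Cov X Xm Y Ym f" and hg: "hypercover C Cov Y Ym Z Zm g"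
    and hgf: "hypercover C Cov X Xm Z Zm (\<lambda>n. g n \<cdot> f n)"
    and "rel_matching_map C X Xm Y Ym f (boundary n) n P pX pY u"
  shows "u \<in> Cov"
proof -
  note gf = smap_comp[OF X Y Z f g]
  obtain P' pX' pZ' u' where "rel_matching_map C X Xm Z Zm (\<lambda>k. g k \<cdot> f k) (boundary n) n P' pX' pZ' u'"
    and "u' \<in> Cov"
    by (rule hypercover_rel_matching_map_cover[OF hgf X Z gf])
  obtain Q qY qZ v where "rel_matching_map C Y Ym Z Zm g (boundary (Suc n)) (Suc n) Q qY qZ v"
    and "v \<in> Cov"
    by (rule hypercover_rel_matching_map_cover[OF hg Y Z g])
  obtain H hX hY h where "rel_matching_map C X Xm Y Ym f (horn (Suc n) (Suc n)) (Suc n) H hX hY h"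
    and "h \<in> Cov"
    by (rule fibration_rel_matching_map_cover[OF fib X Y f])
  obtain P'' pX'' pZ'' u'' where
    "rel_matching_map C X Xm Z Zm (\<lambda>k. g k \<cdot> f k) (boundary (Suc n)) (Suc n) P'' pX'' pZ'' u''"
    and "u'' \<in> Cov"
    by (rule hypercover_rel_matching_map_cover[OF hgf X Z gf])
  interpret boundary_lifting C Cov X Xm Y Ym Z Zm f g n P pX pY u P' pX' pZ' u'
      Q qY qZ v H hX hY h P'' pX'' pZ'' u''
    by unfold_locales fact+
  show ?thesis
    by (rule boundary_map_cover)
qed

end

theorem lemma3p26:
  fixes C :: "('o,'m) cat" and Cov :: "'m set" and k :: nat
    and X Y Z :: "nat \<Rightarrow> 'o"
    and Xm Ym Zm :: "nat \<Rightarrow> nat \<Rightarrow> (nat \<Rightarrow> nat) \<Rightarrow> 'm"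
    and f g :: "nat \<Rightarrow> 'm"
  assumes "descent_category C Cov"
    and "k_groupoid C Cov k X Xm"
    and "k_groupoid C Cov k Y Ym"
    and "k_groupoid C Cov k Z Zm"
    and "is_smap C X Xm Y Ym f"
    and "is_smap C Y Ym Z Zm g"
    and "fibration C Cov X Xm Y Ym f"
    and "hypercover C Cov Y Ym Z Zm g"
    and "hypercover C Cov X Xm Z Zm (\<lambda>n. Cmp C (g n) (f n))"
  shows "hypercover C Cov X Xm Y Ym f"
proof -
  interpret descent_cat C Cov
    by unfold_locales (rule assms(1))
  have X: "is_simplicial C X Xm" and Y: "is_simplicial C Y Ym" and Z: "is_simplicial C Z Zm"
    using assms(2-4) unfolding k_groupoid_def by blast+
  show ?thesis
    by (rule hypercoverI[OF X Y assms(5) boundary_rel_matching_map_cover[OF X Y Z assms(5-9)]])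
qed

end
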